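(* In the pay-to-bid game with risk-neutral players ($u(x)=x$), in the unique symmetric subgame perfect equilibrium, in every round $t$: (1) with re-entry, each player plays Bid with the stationary probability $1-\left(\frac{c}{v-s}\right)^{1/(n-1)}$; (2) without re-entry, each active player plays Bid with probability $1-\left(\frac{c}{v-s}\right)^{1/(n_t-1)}$, where $n_t$ is the number of active players in round $t$.
   Context: Pay-to-bid game: an object has monetary value $v>0$ that is common knowledge; there are $n\ge 2$ players; the bid fee is $c>0$ and the fixed sale price is $s\ge 0$, with $c<v-s$. Play proceeds in rounds $t=1,2,3,\dots$ with complete information. In each round every active player simultaneously chooses an action in $\{\text{Bid},\text{No Bid}\}$. Each Bid costs $c$, paid immediately to the seller. If exactly one active player bids in a round, she wins the object (value $v$), pays $s$, and the game ends; if two or more bid, play continues; if none bids, the round is replayed. With re-entry, all $n$ players are active in every round; without re-entry, the active players in round $t+1$ are those who bid in round $t$, and $n_t$ is the number of active players in round $t$. Players do not discount and their payoff is their final wealth. *)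

theory Defs
  imports "HOL-Probability.Probability"
begin

(* Players are 0,...,n-1.  A history is the list of bidder sets of all stages
   played so far, MOST RECENT FIRST.  Every stage of simultaneous choice
   (including a replayed round) is one entry.  The flag r says whether
   re-entry is allowed. *)

type_synonym hist = "nat set list"

(* behaviour strategy profile: player, history |-> probability of Bid *)
type_synonym profile = "nat \<Rightarrow> hist \<Rightarrow> real"

fun active :: "bool \<Rightarrow> nat \<Rightarrow> hist \<Rightarrow> nat set" where
  "active r n [] = {..<n}"
| "active r n (B # h) = (if r \<or> B = {} then active r n h else B)"

(* nonterminal histories that can arise: bidders are active, and no stage had
   exactly one bidder (that would have ended the game) *)
fun valid_hist :: "bool \<Rightarrow> nat \<Rightarrow> hist \<Rightarrow> bool" where
  "valid_hist r n [] = True"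
| "valid_hist r n (B # h) = (valid_hist r n h \<and> B \<subseteq> active r n h \<and> card B \<noteq> 1)"

(* randomisation: independent uniform draws, one per (stage, player);
   player i bids at stage k after history H iff omega (k,i) < sigma i H *)
definition unif_space :: "(nat \<times> nat \<Rightarrow> real) measure" where
  "unif_space = (\<Pi>\<^sub>M _\<in>(UNIV :: (nat \<times> nat) set). uniform_measure lborel {0..1::real})"

definition stage_bidders :: "bool \<Rightarrow> nat \<Rightarrow> profile \<Rightarrow> hist \<Rightarrow> (nat \<times> nat \<Rightarrow> real) \<Rightarrow> nat \<Rightarrow> nat set" where
  "stage_bidders r n \<sigma> H \<omega> k = {i \<in> active r n H. \<omega> (k, i) < \<sigma> i H}"

fun play_hist :: "bool \<Rightarrow> nat \<Rightarrow> profile \<Rightarrow> hist \<Rightarrow> (nat \<times> nat \<Rightarrow> real) \<Rightarrow> nat \<Rightarrow> hist" where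
  "play_hist r n \<sigma> h0 \<omega> 0 = h0"
| "play_hist r n \<sigma> h0 \<omega> (Suc k) =
     stage_bidders r n \<sigma> (play_hist r n \<sigma> h0 \<omega> k) \<omega> k # play_hist r n \<sigma> h0 \<omega> k"

definition bidders :: "bool \<Rightarrow> nat \<Rightarrow> profile \<Rightarrow> hist \<Rightarrow> (nat \<times> nat \<Rightarrow> real) \<Rightarrow> nat \<Rightarrow> nat set" where
  "bidders r n \<sigma> h0 \<omega> k = stage_bidders r n \<sigma> (play_hist r n \<sigma> h0 \<omega> k) \<omega> k"

definition alive :: "bool \<Rightarrow> nat \<Rightarrow> profile \<Rightarrow> hist \<Rightarrow> (nat \<times> nat \<Rightarrow> real) \<Rightarrow> nat \<Rightarrow> bool" where
  "alive r n \<sigma> h0 \<omega> k = (\<forall>j<k. card (bidders r n \<sigma> h0 \<omega> j) \<noteq> 1)"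

definition wins :: "bool \<Rightarrow> nat \<Rightarrow> profile \<Rightarrow> hist \<Rightarrow> nat \<Rightarrow> (nat \<times> nat \<Rightarrow> real) \<Rightarrow> bool" where
  "wins r n \<sigma> h0 i \<omega> = (\<exists>k. alive r n \<sigma> h0 \<omega> k \<and> bidders r n \<sigma> h0 \<omega> k = {i})"

definition num_bids :: "bool \<Rightarrow> nat \<Rightarrow> profile \<Rightarrow> hist \<Rightarrow> nat \<Rightarrow> (nat \<times> nat \<Rightarrow> real) \<Rightarrow> ennreal" where
  "num_bids r n \<sigma> h0 i \<omega> =
     (\<Sum>k. if alive r n \<sigma> h0 \<omega> k \<and> i \<in> bidders r n \<sigma> h0 \<omega> k then 1 else 0)"

(* Sunk bid costs and initial wealth are constants and irrelevant. *)
definition payoff :: "bool \<Rightarrow> nat \<Rightarrow> real \<Rightarrow> real \<Rightarrow> real \<Rightarrow> profile \<Rightarrow> hist \<Rightarrow> nat \<Rightarrow> ereal" where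
  "payoff r n v s c \<sigma> h0 i =
     ereal ((v - s) * measure unif_space {\<omega> \<in> space unif_space. wins r n \<sigma> h0 i \<omega>})
     - enn2ereal (ennreal c * (\<integral>\<^sup>+ \<omega>. num_bids r n \<sigma> h0 i \<omega> \<partial>unif_space))"

definition is_strategy :: "(hist \<Rightarrow> real) \<Rightarrow> bool" where
  "is_strategy \<tau> = (\<forall>h. 0 \<le> \<tau> h \<and> \<tau> h \<le> 1)"

definition is_profile :: "profile \<Rightarrow> bool" where
  "is_profile \<sigma> = (\<forall>i. is_strategy (\<sigma> i))"

definition is_SPE :: "bool \<Rightarrow> nat \<Rightarrow> real \<Rightarrow> real \<Rightarrow> real \<Rightarrow> profile \<Rightarrow> bool" where
  "is_SPE r n v s c \<sigma> =
     (is_profile \<sigma> \<and>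
      (\<forall>h. valid_hist r n h \<longrightarrow> (\<forall>i \<in> active r n h. \<forall>\<tau>. is_strategy \<tau> \<longrightarrow>
          payoff r n v s c (\<sigma>(i := \<tau>)) h i \<le> payoff r n v s c \<sigma> h i)))"

definition symmetric :: "bool \<Rightarrow> nat \<Rightarrow> profile \<Rightarrow> bool" where
  "symmetric r n \<sigma> =
     (\<forall>h. valid_hist r n h \<longrightarrow> (\<forall>i \<in> active r n h. \<forall>j \<in> active r n h. \<sigma> i h = \<sigma> j h))"

end

theory Submission
  imports Defs
begin

(* The event that the first stages of play from a
   history h0 produce a given sequence of bidder sets xs is a finite-dimensional
   cylinder of the product space of uniform draws, so its probability is the
   product path_prob of the one-stage probabilities stage_prob.  Summing over
   all non-terminating prefixes gives the winning probability win_prob and the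
   expected number of bids exp_bids, both as series, and hence an explicit
   formula for payoff.  Splitting off the first stage yields the one-step
   recursions for win_prob and exp_bids.

   In any SPE every continuation value is >= 0 (never
   bidding is a deviation) and the values of the active players sum to at most
   v - s - c.  By the one-shot deviation principle, the value at a history is a
   mixture of the values of bidding and of not bidding in the current stage.
   For a symmetric SPE a supremum argument shows that all continuation values
   are 0, and then indifference between bidding and not bidding forces
   (1 - p)^(m - 1) = c / (v - s) with m active players.

   Part 3 (existence).  With that stationary probability the expected stage
   gain of every player is zero whatever she does, so every deviation yields
   payoff 0 and the profile is a symmetric SPE. *)

abbreviation unif01 :: "real measure" where
  "unif01 \<equiv> uniform_measure lborel {0..1::real}"

lemma prob_space_unif01: "prob_space unif01"
  by (rule prob_space_uniform_measure) auto

lemma space_unif_space [simp]: "space unif_space = UNIV"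
  by (auto simp: unif_space_def space_PiM)

lemma prob_space_unif_space: "prob_space unif_space"
  unfolding unif_space_def by (intro prob_space_PiM prob_space_unif01)

lemma cylinder_eq_prod_emb:
  "{\<omega>. \<forall>p\<in>J. \<omega> p \<in> X p} = prod_emb UNIV (\<lambda>_. unif01) J (Pi\<^sub>E J X)"
  by (auto simp: prod_emb_def space_PiM PiE_iff)

lemma cylinder_in_sets:
  assumes "finite J" "\<And>p. p \<in> J \<Longrightarrow> X p \<in> sets borel"
  shows "{\<omega>. \<forall>p\<in>J. \<omega> p \<in> X p} \<in> sets unif_space"
  unfolding cylinder_eq_prod_emb unif_space_def
  using assms by (intro sets_PiM_I) auto

lemma emeasure_cylinder:
  assumes "finite J" "\<And>p. p \<in> J \<Longrightarrow> X p \<in> sets borel"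
  shows "emeasure unif_space {\<omega>. \<forall>p\<in>J. \<omega> p \<in> X p} = (\<Prod>p\<in>J. emeasure unif01 (X p))"
  unfolding cylinder_eq_prod_emb unif_space_def
  using assms by (intro emeasure_PiM_emb prob_space_unif01) auto

lemma emeasure_unif01_less:
  assumes "0 \<le> a" "a \<le> 1"
  shows "emeasure unif01 {x. x < a} = ennreal a"
proof -
  have "{0..1} \<inter> {x. x < a} = {0..<a}" using assms by auto
  then show ?thesis using assms by (simp add: emeasure_uniform_measure divide_ennreal_def)
qed

lemma emeasure_unif01_not_less:
  assumes "0 \<le> a" "a \<le> 1"
  shows "emeasure unif01 {x. \<not> x < a} = ennreal (1 - a)"
proof -
  have "{0..1} \<inter> {x. \<not> x < a} = {a..1}" using assms by auto
  then show ?thesis using assms by (simp add: emeasure_uniform_measure divide_ennreal_def)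
qed

lemma active_reentry [simp]: "active True n h = {..<n}"
  by (induction h) auto

lemma valid_hist_active_bounded: "valid_hist r n h \<Longrightarrow> active r n h \<subseteq> {..<n}"
  by (induction h) (auto split: if_splits)

lemma valid_hist_two_active:
  assumes "n \<ge> 2" "valid_hist r n h"
  shows "2 \<le> card (active r n h)"
  using assms(2)
proof (induction h)
  case Nil
  then show ?case using assms(1) by simp
next
  case (Cons B h)
  then have valid: "valid_hist r n h" and B: "B \<subseteq> active r n h" "card B \<noteq> 1" by auto
  have "finite B"
    using finite_subset[OF subset_trans[OF B(1) valid_hist_active_bounded[OF valid]]] by simp
  show ?case
  proof (cases "r \<or> B = {}")
    case True
    then show ?thesis using Cons.IH[OF valid] by simp
  next
    case False
    with \<open>finite B\<close> have "card B > 0" by (simp add: card_gt_0_iff)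
    with B(2) False show ?thesis by simp
  qed
qed

section \<open>Stage and path probabilities\<close>

definition stage_prob :: "bool \<Rightarrow> nat \<Rightarrow> profile \<Rightarrow> hist \<Rightarrow> nat set \<Rightarrow> real" where
  "stage_prob r n \<sigma> H B =
     (if B \<subseteq> active r n H
      then (\<Prod>l\<in>active r n H. if l \<in> B then \<sigma> l H else 1 - \<sigma> l H) else 0)"

primrec path_prob :: "bool \<Rightarrow> nat \<Rightarrow> profile \<Rightarrow> hist \<Rightarrow> hist \<Rightarrow> real" where
  "path_prob r n \<sigma> h0 [] = 1"
| "path_prob r n \<sigma> h0 (B # xs) = path_prob r n \<sigma> h0 xs * stage_prob r n \<sigma> (xs @ h0) B"

primrec feasible :: "bool \<Rightarrow> nat \<Rightarrow> hist \<Rightarrow> hist \<Rightarrow> bool" where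
  "feasible r n h0 [] = True"
| "feasible r n h0 (B # xs) = (feasible r n h0 xs \<and> B \<subseteq> active r n (xs @ h0))"

lemma active_feasible_mono: "feasible r n h0 xs \<Longrightarrow> active r n (xs @ h0) \<subseteq> active r n h0"
  by (induction xs) (auto split: if_splits)

lemma stage_prob_nonneg: "is_profile \<sigma> \<Longrightarrow> 0 \<le> stage_prob r n \<sigma> H B"
  unfolding stage_prob_def is_profile_def is_strategy_def by (auto intro!: prod_nonneg)

lemma path_prob_nonneg: "is_profile \<sigma> \<Longrightarrow> 0 \<le> path_prob r n \<sigma> h0 xs"
  by (induction xs) (auto intro!: mult_nonneg_nonneg stage_prob_nonneg)

lemma path_prob_infeasible: "\<not> feasible r n h0 xs \<Longrightarrow> path_prob r n \<sigma> h0 xs = 0"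
  by (induction xs) (auto simp: stage_prob_def)

(* The random variables a path depends on, and the constraint on each of them. *)
primrec path_coords :: "bool \<Rightarrow> nat \<Rightarrow> hist \<Rightarrow> hist \<Rightarrow> (nat \<times> nat) set" where
  "path_coords r n h0 [] = {}"
| "path_coords r n h0 (B # xs) = path_coords r n h0 xs \<union> Pair (length xs) ` active r n (xs @ h0)"

primrec path_constraint :: "bool \<Rightarrow> nat \<Rightarrow> profile \<Rightarrow> hist \<Rightarrow> hist \<Rightarrow> nat \<times> nat \<Rightarrow> real set" where
  "path_constraint r n \<sigma> h0 [] = (\<lambda>_. UNIV)"
| "path_constraint r n \<sigma> h0 (B # xs) = (\<lambda>(j, l).
     if j = length xs
     then (if l \<in> B then {x. x < \<sigma> l (xs @ h0)} else {x. \<not> x < \<sigma> l (xs @ h0)})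
     else path_constraint r n \<sigma> h0 xs (j, l))"

lemma path_coords_stage: "p \<in> path_coords r n h0 xs \<Longrightarrow> fst p < length xs"
  by (induction xs) auto

lemma finite_path_coords:
  "finite (active r n h0) \<Longrightarrow> feasible r n h0 xs \<Longrightarrow> finite (path_coords r n h0 xs)"
  by (induction xs) (auto dest: active_feasible_mono intro: finite_subset)

lemma path_constraint_borel: "path_constraint r n \<sigma> h0 xs p \<in> sets borel"
  by (induction xs arbitrary: p) (auto split: prod.split)

lemma path_constraint_Cons_earlier:
  "p \<in> path_coords r n h0 xs \<Longrightarrow> path_constraint r n \<sigma> h0 (B # xs) p = path_constraint r n \<sigma> h0 xs p"
  by (auto dest: path_coords_stage split: prod.split)

definition path_event :: "bool \<Rightarrow> nat \<Rightarrow> profile \<Rightarrow> hist \<Rightarrow> hist \<Rightarrow> (nat \<times> nat \<Rightarrow> real) set" where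
  "path_event r n \<sigma> h0 xs = {\<omega>. play_hist r n \<sigma> h0 \<omega> (length xs) = xs @ h0}"

lemma stage_bidders_eq_iff:
  "stage_bidders r n \<sigma> H \<omega> k = B \<longleftrightarrow>
     B \<subseteq> active r n H \<and> (\<forall>l\<in>active r n H. (\<omega> (k, l) < \<sigma> l H) = (l \<in> B))"
  unfolding stage_bidders_def by auto

lemma play_hist_Suc_eq_iff:
  "play_hist r n \<sigma> h0 \<omega> (Suc k) = B # h \<longleftrightarrow>
     play_hist r n \<sigma> h0 \<omega> k = h \<and> stage_bidders r n \<sigma> h \<omega> k = B"
  by auto

lemma feasible_if_played: "play_hist r n \<sigma> h0 \<omega> (length xs) = xs @ h0 \<Longrightarrow> feasible r n h0 xs"
  by (induction xs) (auto simp: play_hist_Suc_eq_iff stage_bidders_def)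

lemma path_event_cylinder:
  "feasible r n h0 xs \<Longrightarrow>
   path_event r n \<sigma> h0 xs = {\<omega>. \<forall>p\<in>path_coords r n h0 xs. \<omega> p \<in> path_constraint r n \<sigma> h0 xs p}"
proof (induction xs)
  case Nil
  then show ?case by (simp add: path_event_def)
next
  case (Cons B xs)
  let ?A = "active r n (xs @ h0)"
  have "\<omega> \<in> path_event r n \<sigma> h0 (B # xs) \<longleftrightarrow>
      \<omega> \<in> path_event r n \<sigma> h0 xs \<and> (\<forall>l\<in>?A. (\<omega> (length xs, l) < \<sigma> l (xs @ h0)) = (l \<in> B))" for \<omega>
    using Cons.prems by (auto simp: path_event_def play_hist_Suc_eq_iff stage_bidders_eq_iff)
  moreover have "(\<forall>p\<in>path_coords r n h0 (B # xs). \<omega> p \<in> path_constraint r n \<sigma> h0 (B # xs) p) \<longleftrightarrow>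
      (\<forall>p\<in>path_coords r n h0 xs. \<omega> p \<in> path_constraint r n \<sigma> h0 xs p) \<and>
      (\<forall>l\<in>?A. (\<omega> (length xs, l) < \<sigma> l (xs @ h0)) = (l \<in> B))" for \<omega>
  proof -
    have "\<omega> (length xs, l) \<in> path_constraint r n \<sigma> h0 (B # xs) (length xs, l) \<longleftrightarrow>
        (\<omega> (length xs, l) < \<sigma> l (xs @ h0)) = (l \<in> B)" for l
      by simp
    then show ?thesis
      unfolding path_coords.simps ball_Un using path_constraint_Cons_earlier[of _ r n h0 xs \<sigma> B]
      by (auto simp del: path_constraint.simps)
  qed
  ultimately show ?case using Cons by auto
qed

lemma emeasure_path_cylinder:
  assumes "finite (active r n h0)" "is_profile \<sigma>" "feasible r n h0 xs"
  shows "(\<Prod>p\<in>path_coords r n h0 xs. emeasure unif01 (path_constraint r n \<sigma> h0 xs p))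
           = ennreal (path_prob r n \<sigma> h0 xs)"
  using assms(3)
proof (induction xs)
  case Nil
  then show ?case by simp
next
  case (Cons B xs)
  let ?A = "active r n (xs @ h0)" and ?H = "xs @ h0"
  let ?m = "\<lambda>p. emeasure unif01 (path_constraint r n \<sigma> h0 (B # xs) p)"
  have feas: "feasible r n h0 xs" and B: "B \<subseteq> ?A" using Cons.prems by auto
  have finA: "finite ?A"
    using finite_subset[OF active_feasible_mono[OF feas] assms(1)] .
  have sigma01: "0 \<le> \<sigma> l ?H" "\<sigma> l ?H \<le> 1" for l
    using assms(2) unfolding is_profile_def is_strategy_def by auto
  have old: "(\<Prod>p\<in>path_coords r n h0 xs. ?m p) = ennreal (path_prob r n \<sigma> h0 xs)"
    using Cons.IH[OF feas] path_constraint_Cons_earlier[of _ r n h0 xs \<sigma> B] by (simp cong: prod.cong)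
  have "(\<Prod>p\<in>Pair (length xs) ` ?A. ?m p) = (\<Prod>l\<in>?A. ?m (length xs, l))"
    by (subst prod.reindex) (auto simp: inj_on_def)
  also have "\<dots> = (\<Prod>l\<in>?A. ennreal (if l \<in> B then \<sigma> l ?H else 1 - \<sigma> l ?H))"
    by (rule prod.cong[OF refl])
       (simp del: emeasure_uniform_measure
             add: emeasure_unif01_less[OF sigma01] emeasure_unif01_not_less[OF sigma01])
  also have "\<dots> = ennreal (stage_prob r n \<sigma> ?H B)"
    unfolding stage_prob_def using B sigma01 by (auto intro!: prod_ennreal)
  finally have new: "(\<Prod>p\<in>Pair (length xs) ` ?A. ?m p) = ennreal (stage_prob r n \<sigma> ?H B)" .
  have disjoint: "path_coords r n h0 xs \<inter> Pair (length xs) ` ?A = {}"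
    using path_coords_stage by fastforce
  have "(\<Prod>p\<in>path_coords r n h0 (B # xs). ?m p)
        = (\<Prod>p\<in>path_coords r n h0 xs. ?m p) * (\<Prod>p\<in>Pair (length xs) ` ?A. ?m p)"
    using finite_path_coords[OF assms(1) feas] finA disjoint
    by (simp add: prod.union_disjoint)
  also have "\<dots> = ennreal (path_prob r n \<sigma> h0 (B # xs))"
    unfolding old new
    using path_prob_nonneg[OF assms(2)] stage_prob_nonneg[OF assms(2)] by (simp add: ennreal_mult)
  finally show ?case .
qed

lemma path_event_measure:
  assumes "finite (active r n h0)" "is_profile \<sigma>"
  shows "path_event r n \<sigma> h0 xs \<in> sets unif_space"
    and "emeasure unif_space (path_event r n \<sigma> h0 xs) = ennreal (path_prob r n \<sigma> h0 xs)"
proof -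
  have "path_event r n \<sigma> h0 xs \<in> sets unif_space \<and>
        emeasure unif_space (path_event r n \<sigma> h0 xs) = ennreal (path_prob r n \<sigma> h0 xs)"
  proof (cases "feasible r n h0 xs")
    case True
    note fin = finite_path_coords[OF assms(1) True] and borel = path_constraint_borel
    show ?thesis
      unfolding path_event_cylinder[OF True]
      using cylinder_in_sets[OF fin borel] emeasure_cylinder[OF fin borel]
            emeasure_path_cylinder[OF assms True] by simp
  next
    case False
    then have "path_event r n \<sigma> h0 xs = {}" unfolding path_event_def using feasible_if_played by blast
    then show ?thesis using path_prob_infeasible[OF False] by simp
  qed
  then show "path_event r n \<sigma> h0 xs \<in> sets unif_space"
    and "emeasure unif_space (path_event r n \<sigma> h0 xs) = ennreal (path_prob r n \<sigma> h0 xs)" by auto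
qed


section \<open>Winning probability and expected number of bids\<close>

primrec outcomes :: "bool \<Rightarrow> nat \<Rightarrow> profile \<Rightarrow> hist \<Rightarrow> (nat \<times> nat \<Rightarrow> real) \<Rightarrow> nat \<Rightarrow> hist" where
  "outcomes r n \<sigma> h0 \<omega> 0 = []"
| "outcomes r n \<sigma> h0 \<omega> (Suc k) = bidders r n \<sigma> h0 \<omega> k # outcomes r n \<sigma> h0 \<omega> k"

definition live_paths :: "nat \<Rightarrow> nat \<Rightarrow> hist set" where
  "live_paths n k = {xs. length xs = k \<and> (\<forall>B\<in>set xs. B \<subseteq> {..<n} \<and> card B \<noteq> 1)}"

definition bid_sets :: "nat \<Rightarrow> nat \<Rightarrow> nat set set" where
  "bid_sets n i = {B. B \<subseteq> {..<n} \<and> i \<in> B}"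

lemma play_hist_outcomes: "play_hist r n \<sigma> h0 \<omega> k = outcomes r n \<sigma> h0 \<omega> k @ h0"
  by (induction k) (simp_all add: bidders_def)

lemma length_outcomes [simp]: "length (outcomes r n \<sigma> h0 \<omega> k) = k"
  by (induction k) auto

lemma set_outcomes: "set (outcomes r n \<sigma> h0 \<omega> k) = bidders r n \<sigma> h0 \<omega> ` {..<k}"
  by (induction k) (auto simp: lessThan_Suc)

lemma path_event_iff: "\<omega> \<in> path_event r n \<sigma> h0 xs \<longleftrightarrow> outcomes r n \<sigma> h0 \<omega> (length xs) = xs"
  unfolding path_event_def play_hist_outcomes by simp

lemma path_event_Cons_iff:
  "\<omega> \<in> path_event r n \<sigma> h0 (B # xs) \<longleftrightarrow>
     bidders r n \<sigma> h0 \<omega> (length xs) = B \<and> outcomes r n \<sigma> h0 \<omega> (length xs) = xs"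
  unfolding path_event_iff by simp

lemma bidders_bounded:
  assumes "active r n h0 \<subseteq> {..<n}"
  shows "bidders r n \<sigma> h0 \<omega> j \<subseteq> {..<n}"
proof -
  have "feasible r n h0 (outcomes r n \<sigma> h0 \<omega> j)"
    by (rule feasible_if_played) (simp add: play_hist_outcomes)
  then show ?thesis
    using active_feasible_mono assms
    unfolding bidders_def stage_bidders_def play_hist_outcomes by blast
qed

lemma alive_iff_live_paths:
  assumes "active r n h0 \<subseteq> {..<n}"
  shows "alive r n \<sigma> h0 \<omega> k \<longleftrightarrow> outcomes r n \<sigma> h0 \<omega> k \<in> live_paths n k"
  unfolding alive_def live_paths_def using bidders_bounded[OF assms] by (auto simp: set_outcomes)

lemma length_live_paths: "xs \<in> live_paths n k \<Longrightarrow> length xs = k"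
  unfolding live_paths_def by simp

lemma win_event_eq:
  assumes "active r n h0 \<subseteq> {..<n}"
  shows "{\<omega>. alive r n \<sigma> h0 \<omega> k \<and> bidders r n \<sigma> h0 \<omega> k = {i}}
           = (\<Union>xs\<in>live_paths n k. path_event r n \<sigma> h0 ({i} # xs))"
  using length_live_paths unfolding alive_iff_live_paths[OF assms]
  by (auto simp: path_event_Cons_iff)

lemma bid_event_eq:
  assumes "active r n h0 \<subseteq> {..<n}"
  shows "{\<omega>. alive r n \<sigma> h0 \<omega> k \<and> i \<in> bidders r n \<sigma> h0 \<omega> k}
           = (\<Union>p\<in>live_paths n k \<times> bid_sets n i. path_event r n \<sigma> h0 (snd p # fst p))"
  using length_live_paths bidders_bounded[OF assms]
  unfolding alive_iff_live_paths[OF assms] bid_sets_def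
  by (auto simp: path_event_Cons_iff)

lemma finite_live_paths: "finite (live_paths n k)"
proof -
  have "live_paths n k \<subseteq> {xs. set xs \<subseteq> Pow {..<n} \<and> length xs = k}"
    unfolding live_paths_def by auto
  then show ?thesis using finite_lists_length_eq[of "Pow {..<n}" k] finite_subset by blast
qed

lemma finite_bid_sets: "finite (bid_sets n i)"
  unfolding bid_sets_def by (rule finite_subset[of _ "Pow {..<n}"]) auto

(* Probability that i wins exactly at stage k, and that i bids at stage k. *)
definition win_at :: "bool \<Rightarrow> nat \<Rightarrow> profile \<Rightarrow> hist \<Rightarrow> nat \<Rightarrow> nat \<Rightarrow> real" where
  "win_at r n \<sigma> h0 i k = (\<Sum>xs\<in>live_paths n k. path_prob r n \<sigma> h0 ({i} # xs))"

definition bid_at :: "bool \<Rightarrow> nat \<Rightarrow> profile \<Rightarrow> hist \<Rightarrow> nat \<Rightarrow> nat \<Rightarrow> real" where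
  "bid_at r n \<sigma> h0 i k = (\<Sum>xs\<in>live_paths n k. \<Sum>C\<in>bid_sets n i. path_prob r n \<sigma> h0 (C # xs))"

definition win_prob :: "bool \<Rightarrow> nat \<Rightarrow> profile \<Rightarrow> hist \<Rightarrow> nat \<Rightarrow> ennreal" where
  "win_prob r n \<sigma> h0 i = (\<Sum>k. ennreal (win_at r n \<sigma> h0 i k))"

definition exp_bids :: "bool \<Rightarrow> nat \<Rightarrow> profile \<Rightarrow> hist \<Rightarrow> nat \<Rightarrow> ennreal" where
  "exp_bids r n \<sigma> h0 i = (\<Sum>k. ennreal (bid_at r n \<sigma> h0 i k))"

lemma win_at_nonneg: "is_profile \<sigma> \<Longrightarrow> 0 \<le> win_at r n \<sigma> h0 i k"
  unfolding win_at_def by (intro sum_nonneg path_prob_nonneg)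

lemma bid_at_nonneg: "is_profile \<sigma> \<Longrightarrow> 0 \<le> bid_at r n \<sigma> h0 i k"
  unfolding bid_at_def by (intro sum_nonneg path_prob_nonneg)

lemma single_bidder_stage_unique:
  assumes "alive r n \<sigma> h0 \<omega> k" "card (bidders r n \<sigma> h0 \<omega> k) = 1"
    and "alive r n \<sigma> h0 \<omega> k'" "card (bidders r n \<sigma> h0 \<omega> k') = 1"
  shows "k = k'"
  using assms unfolding alive_def by (metis nat_neq_iff)

lemma wins_unique: "wins r n \<sigma> h0 i \<omega> \<Longrightarrow> wins r n \<sigma> h0 j \<omega> \<Longrightarrow> i = j"
  unfolding wins_def using single_bidder_stage_unique by (metis is_singletonI is_singleton_altdef singleton_inject)

context
  fixes r n \<sigma> h0
  assumes bounded: "active r n h0 \<subseteq> {..<n}" and profile: "is_profile \<sigma>"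
begin

lemma path_event_sets: "path_event r n \<sigma> h0 xs \<in> sets unif_space"
  using path_event_measure finite_subset[OF bounded] profile by blast

lemma path_event_emeasure: "emeasure unif_space (path_event r n \<sigma> h0 xs) = ennreal (path_prob r n \<sigma> h0 xs)"
  using path_event_measure finite_subset[OF bounded] profile by blast

lemma win_event_sets: "{\<omega>. alive r n \<sigma> h0 \<omega> k \<and> bidders r n \<sigma> h0 \<omega> k = {i}} \<in> sets unif_space"
  unfolding win_event_eq[OF bounded] using finite_live_paths path_event_sets by (intro sets.finite_UN) auto

lemma bid_event_sets: "{\<omega>. alive r n \<sigma> h0 \<omega> k \<and> i \<in> bidders r n \<sigma> h0 \<omega> k} \<in> sets unif_space"
  unfolding bid_event_eq[OF bounded] using finite_live_paths finite_bid_sets path_event_sets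
  by (intro sets.finite_UN) auto

lemma win_event_emeasure:
  "emeasure unif_space {\<omega>. alive r n \<sigma> h0 \<omega> k \<and> bidders r n \<sigma> h0 \<omega> k = {i}} = ennreal (win_at r n \<sigma> h0 i k)"
proof -
  let ?E = "\<lambda>xs. path_event r n \<sigma> h0 ({i} # xs)"
  have "disjoint_family_on ?E (live_paths n k)"
    unfolding disjoint_family_on_def using length_live_paths by (auto simp: path_event_Cons_iff)
  then have "emeasure unif_space (\<Union>xs\<in>live_paths n k. ?E xs) = (\<Sum>xs\<in>live_paths n k. emeasure unif_space (?E xs))"
    using finite_live_paths path_event_sets by (intro sum_emeasure[symmetric]) auto
  also have "\<dots> = ennreal (win_at r n \<sigma> h0 i k)"
    unfolding path_event_emeasure win_at_def by (rule sum_ennreal) (rule path_prob_nonneg[OF profile])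
  finally show ?thesis unfolding win_event_eq[OF bounded] .
qed

lemma bid_event_emeasure:
  "emeasure unif_space {\<omega>. alive r n \<sigma> h0 \<omega> k \<and> i \<in> bidders r n \<sigma> h0 \<omega> k} = ennreal (bid_at r n \<sigma> h0 i k)"
proof -
  let ?E = "\<lambda>p. path_event r n \<sigma> h0 (snd p # fst p)"
  have "disjoint_family_on ?E (live_paths n k \<times> bid_sets n i)"
    unfolding disjoint_family_on_def using length_live_paths by (auto simp: path_event_Cons_iff)
  then have "emeasure unif_space (\<Union>p\<in>live_paths n k \<times> bid_sets n i. ?E p)
      = (\<Sum>p\<in>live_paths n k \<times> bid_sets n i. emeasure unif_space (?E p))"
    using finite_live_paths finite_bid_sets path_event_sets by (intro sum_emeasure[symmetric]) auto
  also have "\<dots> = ennreal (\<Sum>p\<in>live_paths n k \<times> bid_sets n i. path_prob r n \<sigma> h0 (snd p # fst p))"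
    unfolding path_event_emeasure by (rule sum_ennreal) (rule path_prob_nonneg[OF profile])
  also have "\<dots> = ennreal (bid_at r n \<sigma> h0 i k)"
    unfolding bid_at_def by (simp only: sum.cartesian_product split_def)
  finally show ?thesis unfolding bid_event_eq[OF bounded] .
qed

lemma wins_sets: "{\<omega> \<in> space unif_space. wins r n \<sigma> h0 i \<omega>} \<in> sets unif_space"
proof -
  have "{\<omega> \<in> space unif_space. wins r n \<sigma> h0 i \<omega>}
      = (\<Union>k. {\<omega>. alive r n \<sigma> h0 \<omega> k \<and> bidders r n \<sigma> h0 \<omega> k = {i}})"
    unfolding wins_def by auto
  then show ?thesis using win_event_sets by auto
qed

lemma emeasure_wins: "emeasure unif_space {\<omega> \<in> space unif_space. wins r n \<sigma> h0 i \<omega>} = win_prob r n \<sigma> h0 i"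
proof -
  let ?W = "\<lambda>k. {\<omega>. alive r n \<sigma> h0 \<omega> k \<and> bidders r n \<sigma> h0 \<omega> k = {i}}"
  have eq: "{\<omega> \<in> space unif_space. wins r n \<sigma> h0 i \<omega>} = (\<Union>k. ?W k)"
    unfolding wins_def by auto
  have "disjoint_family ?W"
    unfolding disjoint_family_on_def using single_bidder_stage_unique by fastforce
  then have "emeasure unif_space (\<Union>k. ?W k) = (\<Sum>k. emeasure unif_space (?W k))"
    using win_event_sets by (intro suminf_emeasure[symmetric]) auto
  then show ?thesis unfolding eq win_prob_def win_event_emeasure .
qed

lemma nn_integral_num_bids: "(\<integral>\<^sup>+ \<omega>. num_bids r n \<sigma> h0 i \<omega> \<partial>unif_space) = exp_bids r n \<sigma> h0 i"
proof -
  let ?V = "\<lambda>k. {\<omega>. alive r n \<sigma> h0 \<omega> k \<and> i \<in> bidders r n \<sigma> h0 \<omega> k}"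
  have eq: "num_bids r n \<sigma> h0 i \<omega> = (\<Sum>k. indicator (?V k) \<omega>)" for \<omega>
    unfolding num_bids_def by (intro suminf_cong) (simp add: indicator_def)
  have "(\<integral>\<^sup>+ \<omega>. (\<Sum>k. indicator (?V k) \<omega>) \<partial>unif_space) = (\<Sum>k. \<integral>\<^sup>+ \<omega>. indicator (?V k) \<omega> \<partial>unif_space)"
    using bid_event_sets by (intro nn_integral_suminf) auto
  also have "\<dots> = (\<Sum>k. ennreal (bid_at r n \<sigma> h0 i k))"
    using bid_event_sets bid_event_emeasure by (simp add: nn_integral_indicator)
  finally show ?thesis unfolding eq exp_bids_def .
qed

lemma payoff_eq:
  "payoff r n v s c \<sigma> h0 i =
     ereal ((v - s) * enn2real (win_prob r n \<sigma> h0 i)) - enn2ereal (ennreal c * exp_bids r n \<sigma> h0 i)"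
  unfolding payoff_def nn_integral_num_bids measure_def emeasure_wins ..

(* Different players win on disjoint events. *)
lemma sum_win_prob_le_1:
  assumes "finite I"
  shows "(\<Sum>i\<in>I. win_prob r n \<sigma> h0 i) \<le> 1"
proof -
  interpret prob_space unif_space by (rule prob_space_unif_space)
  let ?E = "\<lambda>i. {\<omega> \<in> space unif_space. wins r n \<sigma> h0 i \<omega>}"
  have "disjoint_family_on ?E I"
    unfolding disjoint_family_on_def using wins_unique by blast
  then have "(\<Sum>i\<in>I. emeasure unif_space (?E i)) = emeasure unif_space (\<Union>i\<in>I. ?E i)"
    using wins_sets assms by (intro sum_emeasure) auto
  then have "(\<Sum>i\<in>I. win_prob r n \<sigma> h0 i) = emeasure unif_space (\<Union>i\<in>I. ?E i)"
    by (simp only: emeasure_wins)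
  also have "\<dots> \<le> 1" by (rule emeasure_le_1)
  finally show ?thesis .
qed

lemma win_prob_le_1: "win_prob r n \<sigma> h0 i \<le> 1"
  using sum_win_prob_le_1[of "{i}"] by simp

end


section \<open>One-step recursion\<close>

definition cont_sets :: "nat \<Rightarrow> nat set set" where
  "cont_sets n = {B. B \<subseteq> {..<n} \<and> card B \<noteq> 1}"

lemma finite_cont_sets: "finite (cont_sets n)"
  unfolding cont_sets_def by (rule finite_subset[of _ "Pow {..<n}"]) auto

(* Splitting off the oldest stage of a path. *)
lemma path_prob_snoc:
  "path_prob r n \<sigma> h0 (xs @ [B]) = stage_prob r n \<sigma> h0 B * path_prob r n \<sigma> (B # h0) xs"
  by (induction xs) simp_all

lemma path_prob_Cons_snoc:
  "path_prob r n \<sigma> h0 (C # xs @ [B]) = stage_prob r n \<sigma> h0 B * path_prob r n \<sigma> (B # h0) (C # xs)"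
  using path_prob_snoc[of r n \<sigma> h0 "C # xs" B] by simp

lemma live_paths_0: "live_paths n 0 = {[]}"
  unfolding live_paths_def by auto

lemma sum_live_paths_Suc:
  "(\<Sum>xs\<in>live_paths n (Suc k). F xs) = (\<Sum>B\<in>cont_sets n. \<Sum>ys\<in>live_paths n k. F (ys @ [B]))"
proof -
  have eq: "live_paths n (Suc k) = (\<lambda>p. fst p @ [snd p]) ` (live_paths n k \<times> cont_sets n)"
  proof (intro equalityI subsetI)
    fix xs assume xs: "xs \<in> live_paths n (Suc k)"
    then obtain ys B where "xs = ys @ [B]"
      unfolding live_paths_def by (cases xs rule: rev_cases) auto
    then show "xs \<in> (\<lambda>p. fst p @ [snd p]) ` (live_paths n k \<times> cont_sets n)"
      using xs unfolding live_paths_def cont_sets_def by (auto intro!: image_eqI[where x = "(ys, B)"])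
  qed (auto simp: live_paths_def cont_sets_def; blast)
  have "inj_on (\<lambda>p. fst p @ [snd p]) (live_paths n k \<times> cont_sets n)"
    unfolding inj_on_def by auto
  then have "(\<Sum>xs\<in>live_paths n (Suc k). F xs) = (\<Sum>ys\<in>live_paths n k. \<Sum>B\<in>cont_sets n. F (ys @ [B]))"
    unfolding eq by (simp add: sum.reindex sum.cartesian_product split_def)
  then show ?thesis by (simp only: sum.swap[of _ "cont_sets n"])
qed

lemma win_at_Suc:
  "win_at r n \<sigma> h0 i (Suc k) = (\<Sum>B\<in>cont_sets n. stage_prob r n \<sigma> h0 B * win_at r n \<sigma> (B # h0) i k)"
  unfolding win_at_def sum_live_paths_Suc by (simp only: path_prob_Cons_snoc sum_distrib_left)

lemma bid_at_Suc:
  "bid_at r n \<sigma> h0 i (Suc k) = (\<Sum>B\<in>cont_sets n. stage_prob r n \<sigma> h0 B * bid_at r n \<sigma> (B # h0) i k)"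
  unfolding bid_at_def sum_live_paths_Suc by (simp only: path_prob_Cons_snoc sum_distrib_left)

lemma ennreal_suminf_head: "(\<Sum>k. f k) = f 0 + (\<Sum>k. f (Suc k))" for f :: "nat \<Rightarrow> ennreal"
  using sums_unique[OF sums_Suc[OF summable_sums[OF summableI[of "\<lambda>k. f (Suc k)"]]]]
  by (simp add: add.commute)

lemma ennreal_series_rec:
  fixes a :: "hist \<Rightarrow> nat \<Rightarrow> real" and q :: "nat set \<Rightarrow> real"
  assumes "\<And>h k. 0 \<le> a h k" "\<And>B. 0 \<le> q B"
    and "\<And>k. a h0 (Suc k) = (\<Sum>B\<in>cont_sets n. q B * a (B # h0) k)"
  shows "(\<Sum>k. ennreal (a h0 k)) = ennreal (a h0 0) + (\<Sum>B\<in>cont_sets n. ennreal (q B) * (\<Sum>k. ennreal (a (B # h0) k)))"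
proof -
  have step: "ennreal (a h0 (Suc k)) = (\<Sum>B\<in>cont_sets n. ennreal (q B) * ennreal (a (B # h0) k))" for k
  proof -
    have "(\<Sum>B\<in>cont_sets n. ennreal (q B * a (B # h0) k)) = ennreal (a h0 (Suc k))"
      unfolding assms(3) using assms(1,2) by (intro sum_ennreal) simp
    then show ?thesis using assms(1,2) by (simp add: ennreal_mult)
  qed
  have "(\<Sum>k. ennreal (a h0 k)) = ennreal (a h0 0) + (\<Sum>k. ennreal (a h0 (Suc k)))"
    by (rule ennreal_suminf_head)
  also have "(\<Sum>k. ennreal (a h0 (Suc k))) = (\<Sum>B\<in>cont_sets n. \<Sum>k. ennreal (q B) * ennreal (a (B # h0) k))"
    unfolding step by (rule suminf_sum) simp
  finally show ?thesis by simp
qed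

lemma win_prob_rec:
  assumes "is_profile \<sigma>"
  shows "win_prob r n \<sigma> h0 i = ennreal (stage_prob r n \<sigma> h0 {i})
           + (\<Sum>B\<in>cont_sets n. ennreal (stage_prob r n \<sigma> h0 B) * win_prob r n \<sigma> (B # h0) i)"
proof -
  have "win_at r n \<sigma> h0 i 0 = stage_prob r n \<sigma> h0 {i}"
    unfolding win_at_def live_paths_0 by simp
  moreover have "win_prob r n \<sigma> h0 i = ennreal (win_at r n \<sigma> h0 i 0)
      + (\<Sum>B\<in>cont_sets n. ennreal (stage_prob r n \<sigma> h0 B) * win_prob r n \<sigma> (B # h0) i)"
    unfolding win_prob_def
    by (rule ennreal_series_rec[where a = "\<lambda>h. win_at r n \<sigma> h i"])
       (simp_all only: win_at_nonneg[OF assms] stage_prob_nonneg[OF assms] win_at_Suc)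
  ultimately show ?thesis by simp
qed

lemma exp_bids_rec:
  assumes "is_profile \<sigma>"
  shows "exp_bids r n \<sigma> h0 i = ennreal (\<Sum>B\<in>bid_sets n i. stage_prob r n \<sigma> h0 B)
           + (\<Sum>B\<in>cont_sets n. ennreal (stage_prob r n \<sigma> h0 B) * exp_bids r n \<sigma> (B # h0) i)"
proof -
  have "bid_at r n \<sigma> h0 i 0 = (\<Sum>B\<in>bid_sets n i. stage_prob r n \<sigma> h0 B)"
    unfolding bid_at_def live_paths_0 by simp
  moreover have "exp_bids r n \<sigma> h0 i = ennreal (bid_at r n \<sigma> h0 i 0)
      + (\<Sum>B\<in>cont_sets n. ennreal (stage_prob r n \<sigma> h0 B) * exp_bids r n \<sigma> (B # h0) i)"
    unfolding exp_bids_def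
    by (rule ennreal_series_rec[where a = "\<lambda>h. bid_at r n \<sigma> h i"])
       (simp_all only: bid_at_nonneg[OF assms] stage_prob_nonneg[OF assms] bid_at_Suc)
  ultimately show ?thesis by simp
qed

lemma path_prob_no_bid:
  assumes "\<And>xs. feasible r n h0 xs \<Longrightarrow> stage_prob r n \<sigma> (xs @ h0) C = 0"
  shows "path_prob r n \<sigma> h0 (C # xs) = 0"
proof (cases "feasible r n h0 xs")
  case True
  then show ?thesis using assms by simp
next
  case False
  then show ?thesis by (simp add: path_prob_infeasible)
qed

lemma series_zero_if_no_bid:
  assumes "\<And>C xs. i \<in> C \<Longrightarrow> path_prob r n \<sigma> h0 (C # xs) = 0"
  shows "win_prob r n \<sigma> h0 i = 0" "exp_bids r n \<sigma> h0 i = 0"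
proof -
  have win: "win_at r n \<sigma> h0 i k = 0" for k
    using assms unfolding win_at_def by (simp del: path_prob.simps)
  have bid: "bid_at r n \<sigma> h0 i k = 0" for k
    using assms unfolding bid_at_def bid_sets_def by (auto simp del: path_prob.simps intro!: sum.neutral)
  show "win_prob r n \<sigma> h0 i = 0" "exp_bids r n \<sigma> h0 i = 0"
    unfolding win_prob_def exp_bids_def by (simp_all add: win bid)
qed

lemma inactive_series_zero:
  assumes "i \<notin> active r n h0"
  shows "win_prob r n \<sigma> h0 i = 0" "exp_bids r n \<sigma> h0 i = 0"
proof -
  have "stage_prob r n \<sigma> (xs @ h0) C = 0" if "i \<in> C" "feasible r n h0 xs" for C xs
  proof -
    have "\<not> C \<subseteq> active r n (xs @ h0)"
      using that assms active_feasible_mono[OF that(2)] by blast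
    then show ?thesis unfolding stage_prob_def by simp
  qed
  then have no_bid: "path_prob r n \<sigma> h0 (C # xs) = 0" if "i \<in> C" for C xs
    using that by (intro path_prob_no_bid)
  show "win_prob r n \<sigma> h0 i = 0" by (rule series_zero_if_no_bid(1)[OF no_bid])
  show "exp_bids r n \<sigma> h0 i = 0" by (rule series_zero_if_no_bid(2)[OF no_bid])
qed

lemma never_bid_series_zero:
  assumes "\<And>g. length g \<ge> length h0 \<Longrightarrow> \<sigma> i g = 0" "active r n h0 \<subseteq> {..<n}"
  shows "win_prob r n \<sigma> h0 i = 0" "exp_bids r n \<sigma> h0 i = 0"
proof -
  have "stage_prob r n \<sigma> (xs @ h0) C = 0" if "i \<in> C" "feasible r n h0 xs" for C xs
  proof (cases "C \<subseteq> active r n (xs @ h0)")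
    case True
    let ?H = "xs @ h0"
    let ?A = "active r n ?H"
    have fin: "finite ?A"
      using finite_subset[OF subset_trans[OF active_feasible_mono[OF that(2)] assms(2)]] by simp
    have active: "i \<in> ?A" using True that(1) by blast
    have zero: "\<sigma> i ?H = 0" by (rule assms(1)) simp
    have "(\<Prod>l\<in>?A. if l \<in> C then \<sigma> l ?H else 1 - \<sigma> l ?H) = 0"
      using active zero that(1) by (intro prod_zero[OF fin]) auto
    then show ?thesis unfolding stage_prob_def by simp
  qed (simp add: stage_prob_def)
  then have no_bid: "path_prob r n \<sigma> h0 (C # xs) = 0" if "i \<in> C" for C xs
    using that by (intro path_prob_no_bid)
  show "win_prob r n \<sigma> h0 i = 0" by (rule series_zero_if_no_bid(1)[OF no_bid])
  show "exp_bids r n \<sigma> h0 i = 0" by (rule series_zero_if_no_bid(2)[OF no_bid])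
qed

lemma series_local:
  assumes "\<And>j g. length g \<ge> length h0 \<Longrightarrow> \<sigma>' j g = \<sigma> j g"
  shows "win_prob r n \<sigma>' h0 i = win_prob r n \<sigma> h0 i" "exp_bids r n \<sigma>' h0 i = exp_bids r n \<sigma> h0 i"
proof -
  have eq: "\<And>j. \<sigma>' j (xs @ h0) = \<sigma> j (xs @ h0)" for xs
    by (rule assms) simp
  have "stage_prob r n \<sigma>' (xs @ h0) B = stage_prob r n \<sigma> (xs @ h0) B" for xs B
    unfolding stage_prob_def eq ..
  then have paths: "path_prob r n \<sigma>' h0 xs = path_prob r n \<sigma> h0 xs" for xs
    by (induction xs) simp_all
  show "win_prob r n \<sigma>' h0 i = win_prob r n \<sigma> h0 i" "exp_bids r n \<sigma>' h0 i = exp_bids r n \<sigma> h0 i"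
    unfolding win_prob_def exp_bids_def win_at_def bid_at_def by (simp_all only: paths)
qed

(* A player can only win on paths on which she bids. *)
lemma win_prob_le_exp_bids:
  assumes "i < n" "is_profile \<sigma>"
  shows "win_prob r n \<sigma> h0 i \<le> exp_bids r n \<sigma> h0 i"
  unfolding win_prob_def exp_bids_def
proof (intro suminf_le ennreal_leI)
  fix k
  have "{i} \<in> bid_sets n i" using assms(1) unfolding bid_sets_def by auto
  then have "path_prob r n \<sigma> h0 ({i} # xs) \<le> (\<Sum>C\<in>bid_sets n i. path_prob r n \<sigma> h0 (C # xs))" for xs
    using finite_bid_sets path_prob_nonneg[OF assms(2)]
    by (intro member_le_sum) (simp_all del: path_prob.simps)
  then show "win_at r n \<sigma> h0 i k \<le> bid_at r n \<sigma> h0 i k"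
    unfolding win_at_def bid_at_def by (intro sum_mono)
qed auto

lemma sum_pow_prod:
  fixes f g :: "nat \<Rightarrow> real"
  assumes "finite A"
  shows "(\<Sum>X\<in>Pow A. \<Prod>l\<in>A. if l \<in> X then f l else g l) = (\<Prod>l\<in>A. f l + g l)"
proof -
  have "(\<Prod>l\<in>A. if l \<in> X then f l else g l) = (\<Prod>l\<in>X. f l) * (\<Prod>l\<in>A - X. g l)" if "X \<subseteq> A" for X
  proof -
    have "A \<inter> {l. l \<in> X} = X" "A \<inter> - {l. l \<in> X} = A - X" using that by auto
    then show ?thesis using prod.If_cases[OF assms, of "\<lambda>l. l \<in> X" f g] by simp
  qed
  then show ?thesis unfolding prod_add[OF assms] by (intro sum.cong) auto
qed

context
  fixes r :: bool and n :: nat and H :: hist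
  assumes bounded: "active r n H \<subseteq> {..<n}"
begin

lemma finite_active: "finite (active r n H)"
  using finite_subset[OF bounded] by simp

lemma sum_stage_prob: "(\<Sum>B\<in>Pow {..<n}. stage_prob r n \<sigma> H B) = 1"
proof -
  have "(\<Sum>B\<in>Pow {..<n}. stage_prob r n \<sigma> H B) = (\<Sum>B\<in>Pow (active r n H). stage_prob r n \<sigma> H B)"
    using bounded by (intro sum.mono_neutral_right) (auto simp: stage_prob_def)
  also have "\<dots> = 1"
    using sum_pow_prod[OF finite_active, of "\<lambda>l. \<sigma> l H" "\<lambda>l. 1 - \<sigma> l H"] by (simp add: stage_prob_def)
  finally show ?thesis .
qed

lemma sum_stage_prob_bid:
  assumes "i \<in> active r n H"
  shows "(\<Sum>B\<in>bid_sets n i. stage_prob r n \<sigma> H B) = \<sigma> i H"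
proof -
  let ?A = "active r n H"
  let ?g = "\<lambda>l. if l = i then 0 else 1 - \<sigma> l H"
  have "(\<Sum>B\<in>bid_sets n i. stage_prob r n \<sigma> H B) = (\<Sum>B\<in>Pow {..<n}. if i \<in> B then stage_prob r n \<sigma> H B else 0)"
    unfolding bid_sets_def by (simp add: sum.inter_filter[symmetric] Int_def Pow_def conj_commute)
  also have "\<dots> = (\<Sum>B\<in>Pow ?A. if i \<in> B then stage_prob r n \<sigma> H B else 0)"
    using bounded by (intro sum.mono_neutral_right) (auto simp: stage_prob_def)
  also have "\<dots> = (\<Sum>B\<in>Pow ?A. \<Prod>l\<in>?A. if l \<in> B then \<sigma> l H else ?g l)"
    using assms finite_active
    by (intro sum.cong refl) (auto simp: stage_prob_def intro!: prod.cong prod_zero[symmetric] bexI[of _ i])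
  also have "\<dots> = (\<Prod>l\<in>?A. \<sigma> l H + ?g l)"
    by (rule sum_pow_prod[OF finite_active])
  also have "\<dots> = \<sigma> i H"
    using prod.remove[OF finite_active assms, of "\<lambda>l. \<sigma> l H + ?g l"] by simp
  finally show ?thesis .
qed

lemma stage_prob_single:
  assumes "j \<in> active r n H"
  shows "stage_prob r n \<sigma> H {j} = \<sigma> j H * (\<Prod>l\<in>active r n H - {j}. 1 - \<sigma> l H)"
proof -
  let ?f = "\<lambda>l. if l \<in> {j} then \<sigma> l H else 1 - \<sigma> l H"
  have "stage_prob r n \<sigma> H {j} = \<sigma> j H * (\<Prod>l\<in>active r n H - {j}. ?f l)"
    using assms prod.remove[OF finite_active assms, of ?f] by (simp add: stage_prob_def)
  also have "(\<Prod>l\<in>active r n H - {j}. ?f l) = (\<Prod>l\<in>active r n H - {j}. 1 - \<sigma> l H)"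
    by (intro prod.cong) auto
  finally show ?thesis .
qed

lemma stage_prob_mix:
  assumes "i \<in> active r n H"
  shows "stage_prob r n \<sigma> H B = \<sigma> i H * stage_prob r n (\<sigma>(i := (\<sigma> i)(H := 1))) H B
                               + (1 - \<sigma> i H) * stage_prob r n (\<sigma>(i := (\<sigma> i)(H := 0))) H B"
proof (cases "B \<subseteq> active r n H")
  case True
  let ?P = "\<lambda>\<tau>::profile. \<Prod>l\<in>active r n H - {i}. if l \<in> B then \<tau> l H else 1 - \<tau> l H"
  have split: "stage_prob r n \<tau> H B = (if i \<in> B then \<tau> i H else 1 - \<tau> i H) * ?P \<tau>" for \<tau>
    using True prod.remove[OF finite_active assms, of "\<lambda>l. if l \<in> B then \<tau> l H else 1 - \<tau> l H"]
    by (simp add: stage_prob_def)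
  have "?P (\<sigma>(i := (\<sigma> i)(H := q))) = ?P \<sigma>" for q
    by (intro prod.cong) auto
  then show ?thesis unfolding split by (simp add: algebra_simps)
qed (simp add: stage_prob_def)

end


section \<open>Continuation values in a subgame perfect equilibrium\<close>

definition cont_value :: "bool \<Rightarrow> nat \<Rightarrow> real \<Rightarrow> real \<Rightarrow> real \<Rightarrow> profile \<Rightarrow> hist \<Rightarrow> nat \<Rightarrow> real" where
  "cont_value r n v s c \<sigma> h i = (v - s) * enn2real (win_prob r n \<sigma> h i) - c * enn2real (exp_bids r n \<sigma> h i)"

definition live_sets :: "bool \<Rightarrow> nat \<Rightarrow> hist \<Rightarrow> nat set set" where
  "live_sets r n H = {B \<in> cont_sets n. B \<subseteq> active r n H}"

(* Value of i when the stage at H is played with sigma' and play continues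
   with sigma afterwards. *)
definition one_step_value :: "bool \<Rightarrow> nat \<Rightarrow> real \<Rightarrow> real \<Rightarrow> real \<Rightarrow> profile \<Rightarrow> profile \<Rightarrow> hist \<Rightarrow> nat \<Rightarrow> real" where
  "one_step_value r n v s c \<sigma> \<sigma>' H i =
     (v - s) * stage_prob r n \<sigma>' H {i} - c * (\<Sum>B\<in>bid_sets n i. stage_prob r n \<sigma>' H B)
     + (\<Sum>B\<in>live_sets r n H. stage_prob r n \<sigma>' H B * cont_value r n v s c \<sigma> (B # H) i)"

lemma finite_live_sets: "finite (live_sets r n H)"
  unfolding live_sets_def using finite_cont_sets by simp

lemma valid_hist_live_sets: "valid_hist r n H \<Longrightarrow> B \<in> live_sets r n H \<Longrightarrow> valid_hist r n (B # H)"
  unfolding live_sets_def cont_sets_def by simp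

lemma ennreal_affine_sum:
  assumes "finite S" "\<And>B. B \<in> S \<Longrightarrow> X B \<noteq> \<top>" "0 \<le> a" "\<And>B. B \<in> S \<Longrightarrow> 0 \<le> b B"
  shows "ennreal a + (\<Sum>B\<in>S. ennreal (b B) * X B) = ennreal (a + (\<Sum>B\<in>S. b B * enn2real (X B)))"
proof -
  have "(\<Sum>B\<in>S. ennreal (b B) * X B) = (\<Sum>B\<in>S. ennreal (b B * enn2real (X B)))"
  proof (intro sum.cong refl)
    fix B assume B: "B \<in> S"
    have "ennreal (enn2real (X B)) = X B"
      using assms(2)[OF B] by (simp add: ennreal_enn2real less_top[symmetric])
    then show "ennreal (b B) * X B = ennreal (b B * enn2real (X B))"
      using assms(4)[OF B] by (simp add: ennreal_mult)
  qed
  also have "\<dots> = ennreal (\<Sum>B\<in>S. b B * enn2real (X B))"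
    using assms(4) by (intro sum_ennreal) simp
  finally show ?thesis using assms(3,4) by (simp add: ennreal_plus sum_nonneg)
qed

lemma sum_cont_sets_live_sets:
  fixes f :: "nat set \<Rightarrow> ennreal"
  assumes "\<And>B. B \<in> cont_sets n \<Longrightarrow> \<not> B \<subseteq> active r n H \<Longrightarrow> f B = 0"
  shows "(\<Sum>B\<in>cont_sets n. f B) = (\<Sum>B\<in>live_sets r n H. f B)"
  unfolding live_sets_def using assms finite_cont_sets by (intro sum.mono_neutral_right) auto

locale spe =
  fixes r :: bool and n :: nat and v s c :: real and \<sigma> :: profile
  assumes two_players: "n \<ge> 2" and cost_pos: "c > 0" and cost_less: "c < v - s"
    and SPE: "is_SPE r n v s c \<sigma>"
begin

lemma profile: "is_profile \<sigma>"
  using SPE unfolding is_SPE_def by simp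

lemma spe_deviation:
  "valid_hist r n h \<Longrightarrow> i \<in> active r n h \<Longrightarrow> is_strategy \<tau> \<Longrightarrow>
   payoff r n v s c (\<sigma>(i := \<tau>)) h i \<le> payoff r n v s c \<sigma> h i"
  using SPE unfolding is_SPE_def by blast

(* Never bidding guarantees payoff 0, so equilibrium payoffs are nonnegative. *)
lemma payoff_nonneg:
  assumes "valid_hist r n h" "i \<in> active r n h"
  shows "0 \<le> payoff r n v s c \<sigma> h i"
proof -
  let ?\<sigma>0 = "\<sigma>(i := (\<lambda>g. 0))"
  have profile0: "is_profile ?\<sigma>0"
    using profile unfolding is_profile_def is_strategy_def by auto
  have "win_prob r n ?\<sigma>0 h i = 0" "exp_bids r n ?\<sigma>0 h i = 0"
    using never_bid_series_zero[of h ?\<sigma>0 i] valid_hist_active_bounded[OF assms(1)] by auto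
  then have "payoff r n v s c ?\<sigma>0 h i = 0"
    unfolding payoff_eq[OF valid_hist_active_bounded[OF assms(1)] profile0]
    by (simp add: zero_ennreal.rep_eq zero_ereal_def)
  moreover have "payoff r n v s c ?\<sigma>0 h i \<le> payoff r n v s c \<sigma> h i"
    using assms by (intro spe_deviation) (auto simp: is_strategy_def)
  ultimately show ?thesis by simp
qed

lemma exp_bids_finite:
  assumes "valid_hist r n h"
  shows "exp_bids r n \<sigma> h i \<noteq> \<top>"
proof (cases "i \<in> active r n h")
  case True
  show ?thesis
  proof
    assume "exp_bids r n \<sigma> h i = \<top>"
    then have "payoff r n v s c \<sigma> h i = ereal ((v - s) * enn2real (win_prob r n \<sigma> h i)) - enn2ereal (ennreal c * \<top>)"
      unfolding payoff_eq[OF valid_hist_active_bounded[OF assms] profile] by simp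
    also have "\<dots> = - \<infinity>" using cost_pos by (simp add: ennreal_mult_top)
    finally show False using payoff_nonneg[OF assms True] by simp
  qed
qed (simp add: inactive_series_zero)

lemma win_prob_real_le_1: "valid_hist r n h \<Longrightarrow> enn2real (win_prob r n \<sigma> h i) \<le> 1"
  using enn2real_mono[OF win_prob_le_1[OF valid_hist_active_bounded profile], of r n h i] by simp

lemma win_prob_finite:
  assumes "valid_hist r n h"
  shows "win_prob r n \<sigma> h i \<noteq> \<top>"
  using le_less_trans[OF win_prob_le_1[OF valid_hist_active_bounded[OF assms] profile] ennreal_one_less_top]
  by (simp add: less_top)

lemma payoff_cont_value:
  assumes "valid_hist r n h"
  shows "payoff r n v s c \<sigma> h i = ereal (cont_value r n v s c \<sigma> h i)"
proof -
  have "exp_bids r n \<sigma> h i = ennreal (enn2real (exp_bids r n \<sigma> h i))"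
    using exp_bids_finite[OF assms] by (simp add: ennreal_enn2real less_top[symmetric])
  then have "ennreal c * exp_bids r n \<sigma> h i = ennreal (c * enn2real (exp_bids r n \<sigma> h i))"
    using cost_pos by (metis ennreal_mult enn2real_nonneg less_imp_le)
  then show ?thesis
    using cost_pos unfolding payoff_eq[OF valid_hist_active_bounded[OF assms] profile] cont_value_def
    by simp
qed

lemma cont_value_inactive: "i \<notin> active r n h \<Longrightarrow> cont_value r n v s c \<sigma> h i = 0"
  unfolding cont_value_def by (simp add: inactive_series_zero)

lemma cont_value_nonneg:
  assumes "valid_hist r n h"
  shows "0 \<le> cont_value r n v s c \<sigma> h i"
  using payoff_nonneg[OF assms] payoff_cont_value[OF assms] cont_value_inactive
  by (cases "i \<in> active r n h") auto

(* Each win costs at least one bid. *)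
lemma cont_value_le_win_prob:
  assumes "valid_hist r n h" "i \<in> active r n h"
  shows "cont_value r n v s c \<sigma> h i \<le> (v - s - c) * enn2real (win_prob r n \<sigma> h i)"
proof -
  have "i < n" using valid_hist_active_bounded[OF assms(1)] assms(2) by auto
  then have "enn2real (win_prob r n \<sigma> h i) \<le> enn2real (exp_bids r n \<sigma> h i)"
    using win_prob_le_exp_bids[OF _ profile] exp_bids_finite[OF assms(1)]
    by (intro enn2real_mono) (auto simp: less_top)
  then show ?thesis unfolding cont_value_def using cost_pos by (simp add: algebra_simps)
qed

lemma cont_value_le:
  assumes "valid_hist r n h"
  shows "cont_value r n v s c \<sigma> h i \<le> v - s - c"
proof (cases "i \<in> active r n h")
  case True
  have "(v - s - c) * enn2real (win_prob r n \<sigma> h i) \<le> (v - s - c) * 1"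
    using win_prob_real_le_1[OF assms] cost_less by (intro mult_left_mono) auto
  then show ?thesis using cont_value_le_win_prob[OF assms True] by simp
qed (use cost_less cont_value_inactive in simp)

lemma sum_cont_value_le:
  assumes "valid_hist r n h"
  shows "(\<Sum>i\<in>active r n h. cont_value r n v s c \<sigma> h i) \<le> v - s - c"
proof -
  let ?A = "active r n h" and ?w = "\<lambda>i. enn2real (win_prob r n \<sigma> h i)"
  have finA: "finite ?A" using finite_subset[OF valid_hist_active_bounded[OF assms]] by simp
  have "(\<Sum>i\<in>?A. win_prob r n \<sigma> h i) \<le> 1"
    using sum_win_prob_le_1[OF valid_hist_active_bounded[OF assms] profile finA] .
  moreover have "enn2real (\<Sum>i\<in>?A. win_prob r n \<sigma> h i) = (\<Sum>i\<in>?A. ?w i)"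
    using win_prob_finite[OF assms] by (subst enn2real_sum) (auto simp: less_top)
  ultimately have "(\<Sum>i\<in>?A. ?w i) \<le> 1"
    using enn2real_mono[of _ 1] by fastforce
  then have "(\<Sum>i\<in>?A. (v - s - c) * ?w i) \<le> (v - s - c) * 1"
    using cost_less by (simp add: sum_distrib_left[symmetric])
  moreover have "(\<Sum>i\<in>?A. cont_value r n v s c \<sigma> h i) \<le> (\<Sum>i\<in>?A. (v - s - c) * ?w i)"
    using cont_value_le_win_prob[OF assms] by (intro sum_mono) auto
  ultimately show ?thesis by simp
qed

lemma payoff_one_step:
  assumes valid: "valid_hist r n H" and profile': "is_profile \<sigma>'"
    and agree: "\<And>j g. length H < length g \<Longrightarrow> \<sigma>' j g = \<sigma> j g"
  shows "payoff r n v s c \<sigma>' H i = ereal (one_step_value r n v s c \<sigma> \<sigma>' H i)"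
proof -
  let ?q = "stage_prob r n \<sigma>' H"
  let ?L = "live_sets r n H"
  let ?w = "\<lambda>B. enn2real (win_prob r n \<sigma> (B # H) i)" and ?b = "\<lambda>B. enn2real (exp_bids r n \<sigma> (B # H) i)"
  have q_nonneg: "0 \<le> ?q B" for B using stage_prob_nonneg[OF profile'] .
  have q_zero: "\<And>B. B \<in> cont_sets n \<Longrightarrow> \<not> B \<subseteq> active r n H \<Longrightarrow> ?q B = 0"
    unfolding stage_prob_def by simp
  have local: "win_prob r n \<sigma>' (B # H) i = win_prob r n \<sigma> (B # H) i"
    "exp_bids r n \<sigma>' (B # H) i = exp_bids r n \<sigma> (B # H) i" for B
    by (rule series_local; simp add: agree)+
  define X where "X = ?q {i} + (\<Sum>B\<in>?L. ?q B * ?w B)"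
  define Y where "Y = (\<Sum>B\<in>bid_sets n i. ?q B) + (\<Sum>B\<in>?L. ?q B * ?b B)"
  have "win_prob r n \<sigma>' H i = ennreal (?q {i}) + (\<Sum>B\<in>?L. ennreal (?q B) * win_prob r n \<sigma> (B # H) i)"
    unfolding win_prob_rec[OF profile', of r n H i] local by (subst sum_cont_sets_live_sets) (auto simp: q_zero)
  also have "\<dots> = ennreal X"
    unfolding X_def using win_prob_finite valid_hist_live_sets[OF valid] q_nonneg
    by (intro ennreal_affine_sum finite_live_sets) auto
  finally have win: "win_prob r n \<sigma>' H i = ennreal X" .
  have "exp_bids r n \<sigma>' H i = ennreal (\<Sum>B\<in>bid_sets n i. ?q B) + (\<Sum>B\<in>?L. ennreal (?q B) * exp_bids r n \<sigma> (B # H) i)"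
    unfolding exp_bids_rec[OF profile', of r n H i] local by (subst sum_cont_sets_live_sets) (auto simp: q_zero)
  also have "\<dots> = ennreal Y"
    unfolding Y_def using exp_bids_finite valid_hist_live_sets[OF valid] q_nonneg
    by (intro ennreal_affine_sum finite_live_sets) (auto intro: sum_nonneg)
  finally have bids: "exp_bids r n \<sigma>' H i = ennreal Y" .
  have "0 \<le> X" "0 \<le> Y"
    unfolding X_def Y_def using q_nonneg by (auto intro!: add_nonneg_nonneg sum_nonneg)
  then have "payoff r n v s c \<sigma>' H i = ereal ((v - s) * X - c * Y)"
    unfolding payoff_eq[OF valid_hist_active_bounded[OF valid] profile'] win bids
    using cost_pos by (simp add: ennreal_mult[symmetric])
  also have "(v - s) * X - c * Y = one_step_value r n v s c \<sigma> \<sigma>' H i"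
  proof -
    have "(\<Sum>B\<in>?L. ?q B * ((v - s) * ?w B - c * ?b B))
        = (v - s) * (\<Sum>B\<in>?L. ?q B * ?w B) - c * (\<Sum>B\<in>?L. ?q B * ?b B)"
      by (simp add: sum_subtractf sum_distrib_left right_diff_distrib mult.left_commute)
    then show ?thesis
      unfolding X_def Y_def one_step_value_def cont_value_def by (simp add: ring_distribs)
  qed
  finally show ?thesis .
qed

end


section \<open>Uniqueness of the symmetric equilibrium\<close>

lemma one_step_value_affine:
  fixes p :: real
  assumes "\<And>B. stage_prob r n \<sigma>' H B = p * stage_prob r n \<sigma>1 H B + (1 - p) * stage_prob r n \<sigma>0 H B"
  shows "one_step_value r n v s c \<sigma> \<sigma>' H i =
           p * one_step_value r n v s c \<sigma> \<sigma>1 H i + (1 - p) * one_step_value r n v s c \<sigma> \<sigma>0 H i"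
proof -
  have sum_mix: "(\<Sum>B\<in>S. p * f B + (1 - p) * g B) = p * sum f S + (1 - p) * sum g S" for S f g
    by (simp add: sum.distrib sum_distrib_left)
  have sum_mix_weighted: "(\<Sum>B\<in>S. (p * f B + (1 - p) * g B) * w B)
      = p * (\<Sum>B\<in>S. f B * w B) + (1 - p) * (\<Sum>B\<in>S. g B * w B)" for S f g w
    by (simp add: sum.distrib sum_distrib_left ring_distribs mult.assoc)
  have affine: "V * (p * a1 + (1 - p) * a0) - c * (p * S1 + (1 - p) * S0) + (p * T1 + (1 - p) * T0)
      = p * (V * a1 - c * S1 + T1) + (1 - p) * (V * a0 - c * S0 + T0)" for V a1 a0 S1 S0 T1 T0 :: real
    by (simp add: algebra_simps)
  show ?thesis unfolding one_step_value_def assms sum_mix sum_mix_weighted by (rule affine)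
qed

lemma mixture_le:
  fixes W a b p :: real
  assumes "W = p * a + (1 - p) * b" "b \<le> W" "0 < p" "p \<le> 1"
  shows "W \<le> a"
proof -
  have "(1 - p) * b \<le> (1 - p) * W" using assms(2,4) by (intro mult_left_mono) auto
  have "p * W = W - (1 - p) * W" by (simp add: algebra_simps)
  also have "\<dots> \<le> W - (1 - p) * b" using \<open>(1 - p) * b \<le> (1 - p) * W\<close> by linarith
  also have "\<dots> = p * a" using assms(1) by simp
  finally show ?thesis using assms(3) by simp
qed

locale symmetric_spe = spe +
  assumes sym: "symmetric r n \<sigma>"
begin

definition sup_value :: real where
  "sup_value = Sup {cont_value r n v s c \<sigma> h i | h i. valid_hist r n h \<and> i \<in> active r n h}"

lemma values_nonempty: "{cont_value r n v s c \<sigma> h i | h i. valid_hist r n h \<and> i \<in> active r n h} \<noteq> {}"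
proof -
  have "valid_hist r n []" "0 \<in> active r n []" using two_players by auto
  then show ?thesis by blast
qed

lemma values_bdd: "bdd_above {cont_value r n v s c \<sigma> h i | h i. valid_hist r n h \<and> i \<in> active r n h}"
  unfolding bdd_above_def using cont_value_le by blast

lemma sup_value_nonneg: "0 \<le> sup_value"
proof -
  have "valid_hist r n []" "0 \<in> active r n []" using two_players by auto
  then have "cont_value r n v s c \<sigma> [] 0 \<in> {cont_value r n v s c \<sigma> h i | h i. valid_hist r n h \<and> i \<in> active r n h}"
    by blast
  then show ?thesis
    unfolding sup_value_def using cont_value_nonneg[of "[]" 0] by (intro cSup_upper2[OF _ _ values_bdd]) auto
qed

lemma cont_value_le_sup: "valid_hist r n h \<Longrightarrow> cont_value r n v s c \<sigma> h i \<le> sup_value"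
  using sup_value_nonneg cont_value_inactive
  unfolding sup_value_def by (cases "i \<in> active r n h") (auto intro: cSup_upper[OF _ values_bdd])

lemma sup_value_approx:
  assumes "0 < e"
  obtains h i where "valid_hist r n h" "i \<in> active r n h" "sup_value - e < cont_value r n v s c \<sigma> h i"
proof -
  have "sup_value - e < sup_value" using assms by simp
  then show ?thesis
    using that less_cSup_iff[OF values_nonempty values_bdd] unfolding sup_value_def by auto
qed

context
  fixes H i
  assumes valid: "valid_hist r n H" and active: "i \<in> active r n H"
begin

abbreviation "num_active \<equiv> card (active r n H)"
abbreviation "bid_prob \<equiv> \<sigma> i H"
abbreviation "deviation q \<equiv> \<sigma>(i := (\<sigma> i)(H := q))"

lemma active_bounded: "active r n H \<subseteq> {..<n}"
  using valid_hist_active_bounded[OF valid] .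

lemma two_active: "2 \<le> num_active"
  using valid_hist_two_active[OF two_players valid] .

lemma bid_prob_01: "0 \<le> bid_prob" "bid_prob \<le> 1"
  using profile unfolding is_profile_def is_strategy_def by auto

lemma symmetric_bid_prob: "j \<in> active r n H \<Longrightarrow> \<sigma> j H = bid_prob"
  using sym valid active unfolding symmetric_def by blast

lemma deviation_is_profile: "0 \<le> q \<Longrightarrow> q \<le> 1 \<Longrightarrow> is_profile (deviation q)"
  using profile unfolding is_profile_def is_strategy_def by auto

lemma pure_deviation_is_profile: "is_profile (deviation 1)" "is_profile (deviation 0)"
  using deviation_is_profile by auto

abbreviation "eq_value \<equiv> cont_value r n v s c \<sigma> H i"
abbreviation "pure_value q \<equiv> one_step_value r n v s c \<sigma> (deviation q) H i"

lemma one_step_le_value: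
  assumes "0 \<le> q" "q \<le> 1"
  shows "pure_value q \<le> eq_value"
proof -
  have "is_strategy ((\<sigma> i)(H := q))"
    using profile assms unfolding is_profile_def is_strategy_def by auto
  then have "payoff r n v s c (deviation q) H i \<le> payoff r n v s c \<sigma> H i"
    by (rule spe_deviation[OF valid active])
  moreover have "payoff r n v s c (deviation q) H i = ereal (pure_value q)"
    by (rule payoff_one_step[OF valid deviation_is_profile[OF assms]]) auto
  ultimately show ?thesis unfolding payoff_cont_value[OF valid] by simp
qed

lemma value_mix: "eq_value = bid_prob * pure_value 1 + (1 - bid_prob) * pure_value 0"
proof -
  have "payoff r n v s c \<sigma> H i = ereal (one_step_value r n v s c \<sigma> \<sigma> H i)"
    by (rule payoff_one_step[OF valid profile]) simp
  then have "eq_value = one_step_value r n v s c \<sigma> \<sigma> H i"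
    unfolding payoff_cont_value[OF valid] by simp
  also have "\<dots> = bid_prob * pure_value 1 + (1 - bid_prob) * pure_value 0"
    by (rule one_step_value_affine) (rule stage_prob_mix[OF active_bounded active])
  finally show ?thesis .
qed

abbreviation "others_pass \<equiv> (1 - bid_prob) ^ (num_active - 1)"

lemma others_pass_prod: "(\<Prod>l\<in>active r n H - {i}. 1 - \<sigma> l H) = others_pass"
proof -
  have "(\<Prod>l\<in>active r n H - {i}. 1 - \<sigma> l H) = (\<Prod>l\<in>active r n H - {i}. 1 - bid_prob)"
    using symmetric_bid_prob by (intro prod.cong) auto
  then show ?thesis using active finite_active[OF active_bounded] by simp
qed

lemma stage_prob_bid_alone: "stage_prob r n (deviation 1) H {i} = others_pass"
  using stage_prob_single[OF active_bounded active, of "deviation 1"] others_pass_prod by simp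

lemma stage_prob_other_alone:
  assumes "j \<in> active r n H" "j \<noteq> i"
  shows "stage_prob r n (deviation 0) H {j} = bid_prob * (1 - bid_prob) ^ (num_active - 2)"
proof -
  let ?A = "active r n H - {j}"
  have "(\<Prod>l\<in>?A. 1 - deviation 0 l H) = (1 - deviation 0 i H) * (\<Prod>l\<in>?A - {i}. 1 - deviation 0 l H)"
    using active assms finite_active[OF active_bounded] by (intro prod.remove) auto
  also have "\<dots> = (\<Prod>l\<in>?A - {i}. 1 - bid_prob)"
    using symmetric_bid_prob by (auto intro: prod.cong)
  also have "\<dots> = (1 - bid_prob) ^ (num_active - 2)"
    using active assms finite_active[OF active_bounded] by (simp add: card_Diff_singleton_if numeral_2_eq_2)
  finally show ?thesis
    using stage_prob_single[OF active_bounded assms(1), of "deviation 0"] symmetric_bid_prob[OF assms(1)] assms(2)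
    by simp
qed

lemma sum_live_sets_le:
  assumes "is_profile \<tau>" "j \<in> active r n H"
  shows "(\<Sum>B\<in>live_sets r n H. stage_prob r n \<tau> H B) \<le> 1 - stage_prob r n \<tau> H {j}"
proof -
  let ?f = "stage_prob r n \<tau> H"
  have new: "{j} \<notin> live_sets r n H" and sub: "insert {j} (live_sets r n H) \<subseteq> Pow {..<n}"
    using assms(2) active_bounded unfolding live_sets_def cont_sets_def by auto
  have "?f {j} + (\<Sum>B\<in>live_sets r n H. ?f B) = (\<Sum>B\<in>insert {j} (live_sets r n H). ?f B)"
    using new finite_live_sets by simp
  also have "\<dots> \<le> (\<Sum>B\<in>Pow {..<n}. ?f B)"
    using sub stage_prob_nonneg[OF assms(1)] by (intro sum_mono2) auto
  finally have "?f {j} + (\<Sum>B\<in>live_sets r n H. ?f B) \<le> (\<Sum>B\<in>Pow {..<n}. ?f B)" .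
  then show ?thesis using sum_stage_prob[OF active_bounded] by simp
qed

lemma continuation_le_sup:
  assumes "is_profile \<tau>" "j \<in> active r n H"
  shows "(\<Sum>B\<in>live_sets r n H. stage_prob r n \<tau> H B * cont_value r n v s c \<sigma> (B # H) i)
           \<le> sup_value * (1 - stage_prob r n \<tau> H {j})"
proof -
  have "(\<Sum>B\<in>live_sets r n H. stage_prob r n \<tau> H B * cont_value r n v s c \<sigma> (B # H) i)
      \<le> (\<Sum>B\<in>live_sets r n H. stage_prob r n \<tau> H B * sup_value)"
    using stage_prob_nonneg[OF assms(1)] cont_value_le_sup valid_hist_live_sets[OF valid]
    by (intro sum_mono mult_left_mono) auto
  also have "\<dots> \<le> sup_value * (1 - stage_prob r n \<tau> H {j})"
    using sum_live_sets_le[OF assms] sup_value_nonneg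
    by (simp add: sum_distrib_right[symmetric] mult.commute mult_left_mono)
  finally show ?thesis .
qed

lemma continuation_nonneg:
  assumes "is_profile \<tau>"
  shows "0 \<le> (\<Sum>B\<in>live_sets r n H. stage_prob r n \<tau> H B * cont_value r n v s c \<sigma> (B # H) i)"
  using stage_prob_nonneg[OF assms] cont_value_nonneg valid_hist_live_sets[OF valid]
  by (intro sum_nonneg mult_nonneg_nonneg) auto

(* Bidding for sure wins now iff nobody else bids, at cost c. *)
lemma bid_value_bounds:
  "(v - s) * others_pass - c \<le> pure_value 1"
  "pure_value 1 \<le> (v - s) * others_pass - c + sup_value * (1 - others_pass)"
  using continuation_nonneg[OF pure_deviation_is_profile(1)] continuation_le_sup[OF pure_deviation_is_profile(1) active]
        sum_stage_prob_bid[OF active_bounded active, of "deviation 1"]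
  unfolding one_step_value_def stage_prob_bid_alone by auto

(* Passing for sure never wins now, and the game ends with some other
   single bidder j with probability bid_prob (1 - bid_prob)^(num_active - 2). *)
lemma pass_value_le:
  assumes "j \<in> active r n H" "j \<noteq> i"
  shows "pure_value 0 \<le> sup_value * (1 - bid_prob * (1 - bid_prob) ^ (num_active - 2))"
proof -
  have "stage_prob r n (deviation 0) H {i} = 0"
    using stage_prob_single[OF active_bounded active, of "deviation 0"] by simp
  moreover have "(\<Sum>B\<in>bid_sets n i. stage_prob r n (deviation 0) H B) = 0"
    using sum_stage_prob_bid[OF active_bounded active, of "deviation 0"] by simp
  ultimately show ?thesis
    using continuation_le_sup[OF pure_deviation_is_profile(2) assms(1)] stage_prob_other_alone[OF assms]
    unfolding one_step_value_def by simp
qed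

lemma value_le_bid_value: "0 < bid_prob \<Longrightarrow> eq_value \<le> pure_value 1"
  using bid_prob_01 one_step_le_value[of 0] by (intro mixture_le[OF value_mix]) auto

lemma value_le_pass_value: "bid_prob < 1 \<Longrightarrow> eq_value \<le> pure_value 0"
  using bid_prob_01 one_step_le_value[of 1] value_mix
  by (intro mixture_le[of eq_value "1 - bid_prob" "pure_value 0" "pure_value 1"]) (auto simp: algebra_simps)

end

(* Every active player can secure (v - s)(1 - p)^(m - 1) - c by bidding; since
   at least two players share at most v - s - c, this is at most half of it. *)
lemma bid_gain_le_half:
  assumes valid: "valid_hist r n H" and active: "i \<in> active r n H"
  shows "(v - s) * (1 - \<sigma> i H) ^ (card (active r n H) - 1) - c \<le> (v - s - c) / 2"
proof -
  let ?A = "active r n H" and ?D = "(v - s) * (1 - \<sigma> i H) ^ (card (active r n H) - 1) - c"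
  have "?D \<le> cont_value r n v s c \<sigma> H j" if "j \<in> ?A" for j
  proof -
    have "?D = (v - s) * (1 - \<sigma> j H) ^ (card ?A - 1) - c"
      using symmetric_bid_prob[OF valid active that] by simp
    also have "\<dots> \<le> one_step_value r n v s c \<sigma> (\<sigma>(j := (\<sigma> j)(H := 1))) H j"
      by (rule bid_value_bounds(1)[OF valid that])
    also have "\<dots> \<le> cont_value r n v s c \<sigma> H j"
      by (rule one_step_le_value[OF valid that]) auto
    finally show ?thesis .
  qed
  then have "real (card ?A) * ?D \<le> (\<Sum>j\<in>?A. cont_value r n v s c \<sigma> H j)"
    using sum_mono[of ?A "\<lambda>_. ?D"] by simp
  also have "\<dots> \<le> v - s - c" by (rule sum_cont_value_le[OF valid])
  finally have sum_le: "real (card ?A) * ?D \<le> v - s - c" .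
  show ?thesis
  proof (cases "0 \<le> ?D")
    case True
    have "2 * ?D \<le> real (card ?A) * ?D"
      using True two_active[OF valid active] by (intro mult_right_mono) auto
    then show ?thesis using sum_le by simp
  qed (use cost_less in simp)
qed


(* Nobody passes for sure: otherwise a deviation to bidding would earn the
   whole surplus v - s - c. *)
lemma bid_prob_pos:
  assumes "valid_hist r n H" "i \<in> active r n H"
  shows "0 < \<sigma> i H"
proof (rule ccontr)
  assume "\<not> 0 < \<sigma> i H"
  then have "\<sigma> i H = 0" using bid_prob_01[OF assms] by simp
  then show False using bid_gain_le_half[OF assms] cost_less by simp
qed

lemma bid_prob_lower:
  assumes "valid_hist r n H" "i \<in> active r n H"
  shows "(1 - (c + (v - s - c) / 2) / (v - s)) / real n \<le> \<sigma> i H"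
proof -
  let ?p = "\<sigma> i H" and ?m = "card (active r n H)"
  have p01: "0 \<le> ?p" "?p \<le> 1" using bid_prob_01[OF assms] by auto
  have "1 - real (?m - 1) * ?p \<le> (1 - ?p) ^ (?m - 1)"
    using Bernoulli_inequality[of "- ?p" "?m - 1"] p01 by simp
  also have "(1 - ?p) ^ (?m - 1) \<le> (c + (v - s - c) / 2) / (v - s)"
    using bid_gain_le_half[OF assms] cost_pos cost_less by (simp add: field_simps)
  finally have "1 - (c + (v - s - c) / 2) / (v - s) \<le> real (?m - 1) * ?p" by simp
  also have "\<dots> \<le> real n * ?p"
  proof -
    have "?m \<le> card {..<n}" using active_bounded[OF assms] by (intro card_mono) auto
    then show ?thesis using p01 by (intro mult_right_mono) auto
  qed
  finally show ?thesis using two_players by (simp add: field_simps)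
qed

(* Near the supremum, bidding must be worthwhile: others pass with
   probability more than c / (2 (v - s)). *)
lemma others_pass_lower:
  assumes "valid_hist r n H" "i \<in> active r n H"
    and near: "sup_value - c / 2 < cont_value r n v s c \<sigma> H i"
  shows "c / (2 * (v - s)) < (1 - \<sigma> i H) ^ (card (active r n H) - 1)"
proof -
  let ?A = "(1 - \<sigma> i H) ^ (card (active r n H) - 1)"
  have "0 \<le> ?A" using bid_prob_01[OF assms(1,2)] by simp
  then have "0 \<le> sup_value * ?A" using sup_value_nonneg by simp
  moreover have "cont_value r n v s c \<sigma> H i \<le> (v - s) * ?A - c + sup_value * (1 - ?A)"
    using value_le_bid_value[OF assms(1,2) bid_prob_pos[OF assms(1,2)]] bid_value_bounds(2)[OF assms(1,2)]
    by simp
  ultimately have "c / 2 < (v - s) * ?A" using near by (simp add: algebra_simps)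
  then show ?thesis using cost_pos cost_less by (simp add: field_simps)
qed

(* A lower bound on the probability that the game ends with a given
   opponent as the single bidder, valid near the supremum (see below). *)
definition stop_bound :: real where
  "stop_bound = (1 - (c + (v - s - c) / 2) / (v - s)) / real n * (c / (2 * (v - s)))"

lemma pass_bound_less_1: "(c + (v - s - c) / 2) / (v - s) < 1"
proof -
  have "c + (v - s - c) / 2 < v - s" using cost_less by (simp add: field_simps)
  moreover have "0 < v - s" using cost_pos cost_less by linarith
  ultimately show ?thesis by simp
qed

lemma stop_bound_pos: "0 < stop_bound"
  unfolding stop_bound_def using pass_bound_less_1 two_players cost_pos cost_less by simp

lemma other_active_exists:
  assumes "valid_hist r n H" "i \<in> active r n H"
  obtains j where "j \<in> active r n H" "j \<noteq> i"
proof -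
  have "card (active r n H - {i}) \<noteq> 0"
    using two_active[OF assms] assms(2) finite_active[OF active_bounded[OF assms]] by simp
  then have "active r n H - {i} \<noteq> {}" by (metis card.empty)
  then show ?thesis using that by blast
qed

context
  fixes H i
  assumes valid: "valid_hist r n H" and active: "i \<in> active r n H"
    and near: "sup_value - c / 2 < cont_value r n v s c \<sigma> H i"
begin

(* Near the supremum a player does not bid for sure: otherwise she would win
   with probability 0 in the current stage and lose c. *)
lemma near_sup_bid_prob_less_1: "\<sigma> i H < 1"
proof (rule ccontr)
  assume "\<not> \<sigma> i H < 1"
  then have none: "(1 - \<sigma> i H) ^ (card (active r n H) - 1) = 0"
    using bid_prob_01[OF valid active] two_active[OF valid active] by simp
  have "c / (2 * (v - s)) < 0" using others_pass_lower[OF valid active near] unfolding none .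
  moreover have "0 < c / (2 * (v - s))" using cost_pos cost_less by simp
  ultimately show False by simp
qed

lemma near_sup_stop_prob:
  "stop_bound \<le> \<sigma> i H * (1 - \<sigma> i H) ^ (card (active r n H) - 2)"
proof -
  let ?p = "\<sigma> i H" and ?m = "card (active r n H)"
  have "stop_bound \<le> ?p * (1 - ?p) ^ (?m - 1)"
    unfolding stop_bound_def
    using bid_prob_lower[OF valid active] others_pass_lower[OF valid active near]
          pass_bound_less_1 bid_prob_01[OF valid active] two_players cost_pos cost_less
    by (intro mult_mono) auto
  also have "\<dots> \<le> ?p * (1 - ?p) ^ (?m - 2)"
    using bid_prob_01[OF valid active] two_active[OF valid active]
    by (intro mult_left_mono power_decreasing) auto
  finally show ?thesis .
qed

(* Passing loses a fixed fraction of the supremum. *)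
lemma near_sup_value_le: "cont_value r n v s c \<sigma> H i \<le> sup_value * (1 - stop_bound)"
proof -
  obtain j where j: "j \<in> active r n H" "j \<noteq> i" using other_active_exists[OF valid active] .
  have "cont_value r n v s c \<sigma> H i
      \<le> sup_value * (1 - \<sigma> i H * (1 - \<sigma> i H) ^ (card (active r n H) - 2))"
    using value_le_pass_value[OF valid active near_sup_bid_prob_less_1] pass_value_le[OF valid active j]
    by simp
  also have "\<dots> \<le> sup_value * (1 - stop_bound)"
    using near_sup_stop_prob sup_value_nonneg by (intro mult_left_mono) auto
  finally show ?thesis .
qed

end

lemma sup_value_zero: "sup_value = 0"
proof (rule ccontr)
  assume "sup_value \<noteq> 0"
  then have S_pos: "0 < sup_value" using sup_value_nonneg by simp
  define e where "e = min (c / 2) (sup_value * stop_bound)"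
  have "0 < e" unfolding e_def using cost_pos S_pos stop_bound_pos by simp
  then obtain H i where valid: "valid_hist r n H" and active: "i \<in> active r n H"
    and close: "sup_value - e < cont_value r n v s c \<sigma> H i"
    using sup_value_approx by blast
  have "sup_value - c / 2 < cont_value r n v s c \<sigma> H i" using close unfolding e_def by simp
  from near_sup_value_le[OF valid active this] close show False
    unfolding e_def by (simp add: algebra_simps)
qed

lemma cont_value_zero: "valid_hist r n h \<Longrightarrow> cont_value r n v s c \<sigma> h i = 0"
  using cont_value_le_sup cont_value_nonneg sup_value_zero by (metis order_antisym)

(* With all values zero, i must be indifferent to bidding for sure, which pins
   down the probability that nobody else bids. *)
lemma others_pass_eq:
  assumes "valid_hist r n H" "i \<in> active r n H"
  shows "(1 - \<sigma> i H) ^ (card (active r n H) - 1) = c / (v - s)"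
proof -
  let ?A = "(1 - \<sigma> i H) ^ (card (active r n H) - 1)"
  let ?R1 = "one_step_value r n v s c \<sigma> (\<sigma>(i := (\<sigma> i)(H := 1))) H i"
  have "?R1 = (v - s) * ?A - c"
    using bid_value_bounds[OF assms] sup_value_zero by simp
  moreover have "?R1 \<le> 0"
    using one_step_le_value[OF assms, of 1] cont_value_zero[OF assms(1)] by simp
  moreover have "0 \<le> ?R1"
    using value_le_bid_value[OF assms bid_prob_pos[OF assms]] cont_value_zero[OF assms(1)] by simp
  ultimately have "(v - s) * ?A = c" by simp
  then show ?thesis using cost_pos cost_less by (simp add: field_simps)
qed

end

lemma power_eq_imp_powr_inverse:
  fixes y x :: real
  assumes "0 < k" "0 \<le> y" "y ^ k = x"
  shows "x powr (1 / real k) = y"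
proof -
  have "0 \<le> x" using assms(2,3) by auto
  then show ?thesis using real_root_pos_unique[OF assms] root_powr_inverse[OF assms(1)] by simp
qed

theorem symmetric_spe_bid_prob:
  assumes "n \<ge> 2" "c > 0" "c < v - s" "is_SPE r n v s c \<sigma>" "symmetric r n \<sigma>"
    and "valid_hist r n h" "i \<in> active r n h"
  shows "\<sigma> i h = 1 - (c / (v - s)) powr (1 / (real (card (active r n h)) - 1))"
proof -
  interpret symmetric_spe r n v s c \<sigma>
    using assms(1-5) by unfold_locales auto
  let ?m = "card (active r n h)"
  have m: "2 \<le> ?m" using two_active[OF assms(6,7)] .
  have "(c / (v - s)) powr (1 / real (?m - 1)) = 1 - \<sigma> i h"
    using others_pass_eq[OF assms(6,7)] bid_prob_01[OF assms(6,7)] m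
    by (intro power_eq_imp_powr_inverse) auto
  then show ?thesis using m by (simp add: of_nat_diff)
qed


section \<open>Existence of the symmetric equilibrium\<close>

(* The candidate: with m active players, bid with probability 1 - x^(1/(m-1)),
   so that all m - 1 opponents pass with probability exactly x. *)
definition stationary_bid_prob :: "real \<Rightarrow> nat \<Rightarrow> real" where
  "stationary_bid_prob x m = (if 2 \<le> m then 1 - x powr (1 / (real m - 1)) else 0)"

definition stationary_profile :: "bool \<Rightarrow> nat \<Rightarrow> real \<Rightarrow> profile" where
  "stationary_profile r n x = (\<lambda>i h. stationary_bid_prob x (card (active r n h)))"

lemma stationary_profile_is_profile:
  assumes "0 < x" "x < 1"
  shows "is_profile (stationary_profile r n x)"
  using assms powr_le1[of "1 / (real m - 1)" x for m]
  unfolding is_profile_def is_strategy_def stationary_profile_def stationary_bid_prob_def by auto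

lemma stationary_others_pass:
  assumes "0 < x" "2 \<le> m"
  shows "(1 - stationary_bid_prob x m) ^ (m - 1) = x"
proof -
  have k: "real (m - 1) = real m - 1" using assms by (simp add: of_nat_diff)
  have "x powr (1 / (real m - 1)) = root (m - 1) x"
    using root_powr_inverse[of "m - 1" x] assms k by simp
  then have "(1 - stationary_bid_prob x m) = root (m - 1) x"
    using assms by (simp add: stationary_bid_prob_def)
  then show ?thesis using assms by simp
qed

lemma valid_hist_append:
  "valid_hist r n h \<Longrightarrow> feasible r n h xs \<Longrightarrow> \<forall>B\<in>set xs. card B \<noteq> 1 \<Longrightarrow> valid_hist r n (xs @ h)"
  by (induction xs) auto

(* Against the stationary opponents, a player who deviates to any strategy tau
   has expected stage gain zero at every stage, hence payoff zero. *)
context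
  fixes r :: bool and n :: nat and v s c :: real and i :: nat and \<tau> :: "hist \<Rightarrow> real" and h :: hist
    and x :: real and \<sigma>' :: profile
  assumes two_players: "n \<ge> 2" and cost_pos: "c > 0" and cost_less: "c < v - s"
    and strategy: "is_strategy \<tau>" and valid: "valid_hist r n h"
    and x_def: "x = c / (v - s)" and \<sigma>'_def: "\<sigma>' = (stationary_profile r n x)(i := \<tau>)"
begin

lemma x_bounds: "0 < x" "x < 1"
  unfolding x_def using cost_pos cost_less by auto

lemma deviation_profile: "is_profile \<sigma>'"
  using stationary_profile_is_profile[OF x_bounds, of r n] strategy
  unfolding is_profile_def \<sigma>'_def by auto

lemma stage_gain_zero:
  assumes "valid_hist r n H"
  shows "c * (\<Sum>C\<in>bid_sets n i. stage_prob r n \<sigma>' H C) = (v - s) * stage_prob r n \<sigma>' H {i}"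
proof (cases "i \<in> active r n H")
  case False
  then show ?thesis unfolding stage_prob_def bid_sets_def by (auto intro!: sum.neutral)
next
  case True
  let ?A = "active r n H" and ?m = "card (active r n H)"
  have bounded: "?A \<subseteq> {..<n}" using valid_hist_active_bounded[OF assms] .
  have "(\<Prod>l\<in>?A - {i}. 1 - \<sigma>' l H) = (\<Prod>l\<in>?A - {i}. 1 - stationary_bid_prob x ?m)"
    by (intro prod.cong) (auto simp: \<sigma>'_def stationary_profile_def)
  also have "\<dots> = (1 - stationary_bid_prob x ?m) ^ (?m - 1)"
    using True finite_active[OF bounded] by simp
  also have "\<dots> = x"
    using stationary_others_pass[OF x_bounds(1) valid_hist_two_active[OF two_players assms]] .
  finally have alone: "stage_prob r n \<sigma>' H {i} = \<sigma>' i H * x"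
    using stage_prob_single[OF bounded True, of \<sigma>'] by simp
  have "c * (\<Sum>C\<in>bid_sets n i. stage_prob r n \<sigma>' H C) = c * \<sigma>' i H"
    using sum_stage_prob_bid[OF bounded True, of \<sigma>'] by simp
  also have "\<dots> = (v - s) * (\<sigma>' i H * x)" unfolding x_def using cost_pos cost_less by simp
  finally show ?thesis unfolding alone .
qed

lemma bid_at_eq_win_at: "c * bid_at r n \<sigma>' h i k = (v - s) * win_at r n \<sigma>' h i k"
proof -
  have "c * (\<Sum>C\<in>bid_sets n i. path_prob r n \<sigma>' h (C # xs)) = (v - s) * path_prob r n \<sigma>' h ({i} # xs)"
    if xs: "xs \<in> live_paths n k" for xs
  proof (cases "path_prob r n \<sigma>' h xs = 0")
    case False
    then have "feasible r n h xs" using path_prob_infeasible by blast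
    then have "valid_hist r n (xs @ h)"
      using valid_hist_append[OF valid] xs unfolding live_paths_def by auto
    have "c * (\<Sum>C\<in>bid_sets n i. path_prob r n \<sigma>' h (C # xs))
        = path_prob r n \<sigma>' h xs * (c * (\<Sum>C\<in>bid_sets n i. stage_prob r n \<sigma>' (xs @ h) C))"
      by (simp add: sum_distrib_left mult_ac)
    also have "\<dots> = path_prob r n \<sigma>' h xs * ((v - s) * stage_prob r n \<sigma>' (xs @ h) {i})"
      by (simp only: stage_gain_zero[OF \<open>valid_hist r n (xs @ h)\<close>])
    also have "\<dots> = (v - s) * path_prob r n \<sigma>' h ({i} # xs)"
      by simp
    finally show ?thesis .
  qed simp
  then show ?thesis
    unfolding bid_at_def win_at_def by (simp add: sum_distrib_left)
qed

lemma deviation_payoff_zero: "payoff r n v s c \<sigma>' h i = 0"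
proof -
  have bounded: "active r n h \<subseteq> {..<n}" using valid_hist_active_bounded[OF valid] .
  have "ennreal c * exp_bids r n \<sigma>' h i = (\<Sum>k. ennreal (c * bid_at r n \<sigma>' h i k))"
    unfolding exp_bids_def ennreal_suminf_cmult[symmetric]
    using cost_pos bid_at_nonneg[OF deviation_profile] by (simp add: ennreal_mult)
  also have "\<dots> = (\<Sum>k. ennreal (v - s) * ennreal (win_at r n \<sigma>' h i k))"
    unfolding bid_at_eq_win_at
    using cost_pos cost_less win_at_nonneg[OF deviation_profile] by (simp add: ennreal_mult)
  also have "\<dots> = ennreal (v - s) * win_prob r n \<sigma>' h i"
    unfolding win_prob_def by (rule ennreal_suminf_cmult)
  also have "\<dots> = ennreal ((v - s) * enn2real (win_prob r n \<sigma>' h i))"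
  proof -
    have "win_prob r n \<sigma>' h i < \<top>"
      using win_prob_le_1[OF bounded deviation_profile] ennreal_one_less_top by (rule le_less_trans)
    then show ?thesis using cost_pos cost_less by (simp add: ennreal_mult)
  qed
  finally show ?thesis
    unfolding payoff_eq[OF bounded deviation_profile] using cost_pos cost_less by simp
qed

end

theorem stationary_is_symmetric_spe:
  assumes "n \<ge> 2" "c > 0" "c < v - s"
  shows "is_SPE r n v s c (stationary_profile r n (c / (v - s))) \<and> symmetric r n (stationary_profile r n (c / (v - s)))"
proof -
  let ?\<sigma> = "stationary_profile r n (c / (v - s))"
  have profile: "is_profile ?\<sigma>"
    using assms by (intro stationary_profile_is_profile) auto
  have "payoff r n v s c (?\<sigma>(i := \<tau>)) h i \<le> payoff r n v s c ?\<sigma> h i"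
    if "valid_hist r n h" "is_strategy \<tau>" for h i \<tau>
  proof -
    have "is_strategy (?\<sigma> i)" using profile unfolding is_profile_def by simp
    from deviation_payoff_zero[where i = i, OF assms this that(1) refl refl]
    have "payoff r n v s c ?\<sigma> h i = 0" by simp
    moreover have "payoff r n v s c (?\<sigma>(i := \<tau>)) h i = 0"
      by (rule deviation_payoff_zero[where i = i, OF assms that(2,1) refl refl])
    ultimately show ?thesis by simp
  qed
  then show ?thesis
    using profile unfolding is_SPE_def symmetric_def stationary_profile_def by auto
qed

theorem mainTheorem2:
  fixes n :: nat and v s c :: real
  assumes "n \<ge> 2" and "v > 0" and "c > 0" and "s \<ge> 0" and "c < v - s"
  shows "((\<exists>\<sigma>. is_SPE True n v s c \<sigma> \<and> symmetric True n \<sigma>) \<and>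
          (\<forall>\<sigma>. is_SPE True n v s c \<sigma> \<and> symmetric True n \<sigma> \<longrightarrow>
             (\<forall>h. valid_hist True n h \<longrightarrow> (\<forall>i \<in> active True n h.
                \<sigma> i h = 1 - (c / (v - s)) powr (1 / (real n - 1))))))
       \<and> ((\<exists>\<sigma>. is_SPE False n v s c \<sigma> \<and> symmetric False n \<sigma>) \<and>
          (\<forall>\<sigma>. is_SPE False n v s c \<sigma> \<and> symmetric False n \<sigma> \<longrightarrow>
             (\<forall>h. valid_hist False n h \<longrightarrow> (\<forall>i \<in> active False n h.
                \<sigma> i h = 1 - (c / (v - s)) powr (1 / (real (card (active False n h)) - 1))))))"
proof -
  have exists: "\<exists>\<sigma>. is_SPE r n v s c \<sigma> \<and> symmetric r n \<sigma>" for r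
    using stationary_is_symmetric_spe[OF assms(1,3,5)] by blast
  note unique = symmetric_spe_bid_prob[OF assms(1,3,5)]
  have "card (active True n h) = n" for h by simp
  then show ?thesis using exists unique by metis
qed

end
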